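(* Let $A$ be either a complete filtered associative algebra or a complete filtered Lie algebra over a field $\mathbb{K}$ of characteristic zero, and let $P:A\to A$ be a linear map preserving the filtration; put $\tilde P:=\mathrm{id}_A-P$. Let $\chi:A_1\to A_1$ be the BCH-recursion map associated to $P$, and define $D_P:A_1\to A_1\times A_1$ by $D_P(a)=\big(P(\chi(a)),\tilde P(\chi(a))\big)$. Then: (1) for every $a\in A_1$, $\exp(a)=\exp\big(P(\chi(a))\big)\exp\big(\tilde P(\chi(a))\big)$; (2) $D_P$ is a right inverse of $C:A_1\times A_1\to A_1$, i.e. $C\circ D_P=\mathrm{id}_{A_1}$; (3) $C$ restricts to a bijection $C:D_P(A_1)\to A_1$; (4) for every subset $B\subseteq A_1$, $C$ restricts to a bijection $C:D_P(B)\to B$.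
   Context: A complete filtered associative algebra is an associative algebra $A$ with a decreasing filtration $A=A_0\supseteq A_1\supseteq\cdots$ by subalgebras with $A_mA_n\subseteq A_{m+n}$ and $A\cong\varprojlim A/A_n$; a complete filtered Lie algebra is defined analogously with $[A_m,A_n]\subseteq A_{m+n}$. $\mathrm{BCH}(x,y)$ is the Baker--Campbell--Hausdorff Lie series defined by $\exp(x)\exp(y)=\exp(x+y+\mathrm{BCH}(x,y))$, and $C(u,v):=u+v+\mathrm{BCH}(u,v)$, which converges in $A_1$ for $u,v\in A_1$ in both cases. In the Lie algebra case, exponentials are taken in the completion of the universal enveloping algebra with the induced filtration. The BCH-recursion map $\chi:A_1\to A_1$ is defined by $\chi(a)=\lim_{n\to\infty}\chi_{(n)}(a)$ (limit in the filtration topology), where $\chi_{(0)}(a)=a$ and $\chi_{(n+1)}(a)=a-\mathrm{BCH}\big(P(\chi_{(n)}(a)),\tilde P(\chi_{(n)}(a))\big)$; it is the unique map $A_1\to A_1$ satisfying $\chi(a)=a-\mathrm{BCH}\big(P(\chi(a)),\tilde P(\chi(a))\big)$, equivalently $a=C\big(P(\chi(a)),\tilde P(\chi(a))\big)$. *)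

theory Defs
  imports Main "HOL.Vector_Spaces"
begin

text \<open>The algebra A is the whole type; the filtration is F :: nat => set, with F 0 = UNIV.
  Convergence is in the filtration topology.\<close>

definition fconv :: "(nat \<Rightarrow> 'a::ab_group_add set) \<Rightarrow> (nat \<Rightarrow> 'a) \<Rightarrow> 'a \<Rightarrow> bool" where
  "fconv F s L \<longleftrightarrow> (\<forall>k. \<exists>N. \<forall>n\<ge>N. s n - L \<in> F k)"

definition flim :: "(nat \<Rightarrow> 'a::ab_group_add set) \<Rightarrow> (nat \<Rightarrow> 'a) \<Rightarrow> 'a" where
  "flim F s = (THE L. fconv F s L)"

definition fsuminf :: "(nat \<Rightarrow> 'a::ab_group_add set) \<Rightarrow> (nat \<Rightarrow> 'a) \<Rightarrow> 'a" where
  "fsuminf F f = flim F (\<lambda>n. \<Sum>i<n. f i)"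

definition filtration :: "('k::field_char_0 \<Rightarrow> 'a::ab_group_add \<Rightarrow> 'a) \<Rightarrow> (nat \<Rightarrow> 'a set) \<Rightarrow> bool" where
  "filtration scale F \<longleftrightarrow> F 0 = UNIV \<and> (\<forall>n. F (Suc n) \<subseteq> F n) \<and>
     (\<forall>n. 0 \<in> F n \<and> (\<forall>x\<in>F n. \<forall>y\<in>F n. x + y \<in> F n) \<and> (\<forall>c. \<forall>x\<in>F n. scale c x \<in> F n))"

text \<open>Completeness: the canonical map A -> lim A/A_n is bijective. An element of the
  inverse limit is represented by a sequence x with x (n+1) = x n mod A_n; bijectivity says
  that there is exactly one a with a = x n mod A_n for all n.\<close>
definition complete_filtration :: "(nat \<Rightarrow> 'a::ab_group_add set) \<Rightarrow> bool" where
  "complete_filtration F \<longleftrightarrow>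
     (\<forall>x. (\<forall>n. x (Suc n) - x n \<in> F n) \<longrightarrow> (\<exists>!a. \<forall>n. a - x n \<in> F n))"

text \<open>Associative (not necessarily unital) algebra over the field 'k: the ring structure of
  the type 'a together with a bilinear scalar multiplication.\<close>
definition cf_assoc_algebra :: "('k::field_char_0 \<Rightarrow> 'a::ring \<Rightarrow> 'a) \<Rightarrow> (nat \<Rightarrow> 'a set) \<Rightarrow> bool" where
  "cf_assoc_algebra scale F \<longleftrightarrow>
     vector_space scale \<and>
     (\<forall>c x y. scale c (x * y) = scale c x * y \<and> scale c (x * y) = x * scale c y) \<and>
     filtration scale F \<and>
     (\<forall>m n. \<forall>x\<in>F m. \<forall>y\<in>F n. x * y \<in> F (m + n)) \<and>
     complete_filtration F"

text \<open>npow a n = a^(n+1) (no unit is assumed).\<close>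
primrec npow :: "'a::ring \<Rightarrow> nat \<Rightarrow> 'a" where
  "npow a 0 = a"
| "npow a (Suc n) = a * npow a n"

text \<open>Exponentials are taken in the unitization K x A, with product
  (l,a)(m,b) = (lm, l b + m a + a b); exp a = (1, sum_{n>=1} a^n/n!).\<close>
definition umult :: "('k::field_char_0 \<Rightarrow> 'a::ring \<Rightarrow> 'a) \<Rightarrow> 'k \<times> 'a \<Rightarrow> 'k \<times> 'a \<Rightarrow> 'k \<times> 'a" where
  "umult scale p q = (fst p * fst q, scale (fst p) (snd q) + scale (fst q) (snd p) + snd p * snd q)"

definition uexp :: "('k::field_char_0 \<Rightarrow> 'a::ring \<Rightarrow> 'a) \<Rightarrow> (nat \<Rightarrow> 'a set) \<Rightarrow> 'a \<Rightarrow> 'k \<times> 'a" where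
  "uexp scale F a = (1, fsuminf F (\<lambda>n. scale (1 / fact (Suc n)) (npow a n)))"

definition assoc_C :: "('k::field_char_0 \<Rightarrow> 'a::ring \<Rightarrow> 'a) \<Rightarrow> (nat \<Rightarrow> 'a set) \<Rightarrow> 'a \<Rightarrow> 'a \<Rightarrow> 'a" where
  "assoc_C scale F u v =
     (THE c. c \<in> F 1 \<and> uexp scale F c = umult scale (uexp scale F u) (uexp scale F v))"

definition lie_algebra :: "('k::field_char_0 \<Rightarrow> 'a::ab_group_add \<Rightarrow> 'a) \<Rightarrow> ('a \<Rightarrow> 'a \<Rightarrow> 'a) \<Rightarrow> bool" where
  "lie_algebra scale br \<longleftrightarrow>
     vector_space scale \<and>
     (\<forall>x y z. br (x + y) z = br x z + br y z \<and> br x (y + z) = br x y + br x z) \<and>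
     (\<forall>c x y. br (scale c x) y = scale c (br x y) \<and> br x (scale c y) = scale c (br x y)) \<and>
     (\<forall>x. br x x = 0) \<and>
     (\<forall>x y z. br x (br y z) + br y (br z x) + br z (br x y) = 0)"

definition cf_lie_algebra :: "('k::field_char_0 \<Rightarrow> 'a::ab_group_add \<Rightarrow> 'a) \<Rightarrow> ('a \<Rightarrow> 'a \<Rightarrow> 'a) \<Rightarrow> (nat \<Rightarrow> 'a set) \<Rightarrow> bool" where
  "cf_lie_algebra scale br F \<longleftrightarrow>
     lie_algebra scale br \<and> filtration scale F \<and>
     (\<forall>m n. \<forall>x\<in>F m. \<forall>y\<in>F n. br x y \<in> F (m + n)) \<and>
     complete_filtration F"

text \<open>The BCH Lie series via Dynkin's formula:
  C(x,y) = x + y + BCH(x,y) = sum_{n>=1} (-1)^(n-1)/n *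
     sum_{r_i+s_i>0} [x^r1 y^s1 ... x^rn y^sn] / ((sum_i (r_i+s_i)) * prod_i r_i! s_i!),
  grouped by total degree N, with right-nested brackets [z1,[z2,...[z_(k-1),z_k]...]].\<close>
fun rnest :: "('a \<Rightarrow> 'a \<Rightarrow> 'a) \<Rightarrow> 'a::zero list \<Rightarrow> 'a" where
  "rnest br [] = 0"
| "rnest br [z] = z"
| "rnest br (z # zs) = br z (rnest br zs)"

definition dynkin_words :: "nat \<Rightarrow> (nat \<times> nat) list set" where
  "dynkin_words N = {ws. ws \<noteq> [] \<and> (\<forall>p\<in>set ws. 0 < fst p + snd p) \<and>
                         (\<Sum>p\<leftarrow>ws. fst p + snd p) = N}"

definition dynkin_letters :: "'a \<Rightarrow> 'a \<Rightarrow> (nat \<times> nat) list \<Rightarrow> 'a list" where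
  "dynkin_letters x y ws = concat (map (\<lambda>p. replicate (fst p) x @ replicate (snd p) y) ws)"

definition dynkin_coeff :: "nat \<Rightarrow> (nat \<times> nat) list \<Rightarrow> 'k::field_char_0" where
  "dynkin_coeff N ws = (-1) ^ (length ws - 1) /
      (of_nat (length ws) * of_nat N * (\<Prod>p\<leftarrow>ws. fact (fst p) * fact (snd p)))"

definition dynkin_term ::
  "('k::field_char_0 \<Rightarrow> 'a::ab_group_add \<Rightarrow> 'a) \<Rightarrow> ('a \<Rightarrow> 'a \<Rightarrow> 'a) \<Rightarrow> 'a \<Rightarrow> 'a \<Rightarrow> nat \<Rightarrow> 'a" where
  "dynkin_term scale br x y N =
     (\<Sum>ws\<in>dynkin_words N. scale (dynkin_coeff N ws) (rnest br (dynkin_letters x y ws)))"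

definition lie_C ::
  "('k::field_char_0 \<Rightarrow> 'a::ab_group_add \<Rightarrow> 'a) \<Rightarrow> ('a \<Rightarrow> 'a \<Rightarrow> 'a) \<Rightarrow> (nat \<Rightarrow> 'a set) \<Rightarrow> 'a \<Rightarrow> 'a \<Rightarrow> 'a" where
  "lie_C scale br F x y = fsuminf F (dynkin_term scale br x y)"

text \<open>Given C (so BCH(x,y) = C x y - x - y) and P, with Ptilde c = c - P c:
  chi_(n+1)(a) = a - BCH(P chi_(n)(a), Ptilde chi_(n)(a)), chi(a) = lim chi_(n)(a).\<close>
definition bch_chi :: "(nat \<Rightarrow> 'a::ab_group_add set) \<Rightarrow> ('a \<Rightarrow> 'a \<Rightarrow> 'a) \<Rightarrow> ('a \<Rightarrow> 'a) \<Rightarrow> 'a \<Rightarrow> 'a" where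
  "bch_chi F C P a =
     flim F (\<lambda>n. ((\<lambda>c. a - (C (P c) (c - P c) - P c - (c - P c))) ^^ n) a)"

definition bch_D :: "(nat \<Rightarrow> 'a::ab_group_add set) \<Rightarrow> ('a \<Rightarrow> 'a \<Rightarrow> 'a) \<Rightarrow> ('a \<Rightarrow> 'a) \<Rightarrow> 'a \<Rightarrow> 'a \<times> 'a" where
  "bch_D F C P a = (P (bch_chi F C P a), bch_chi F C P a - P (bch_chi F C P a))"

end

theory Submission
  imports Defs "HOL-Computational_Algebra.Formal_Power_Series"
begin

(* The recursion map c \<mapsto> a - BCH(P c, c - P c) strictly increases the filtration degree of
   differences, because BCH has no terms of degree one and P, id - P preserve the filtration.
   Its iterates therefore converge, and the limit \<chi>(a) satisfies a = C(P \<chi>(a), \<chi>(a) - P \<chi>(a)).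
   This gives (2), and (3), (4) hold for any map with a right inverse.

   Statement (1) is then the Baker-Campbell-Hausdorff theorem exp u exp v = exp (C(u,v)) with C
   given by Dynkin's series. It is proved once and for all in a universal algebra: formal series
   in two noncommuting letters x, y, tensored with a second copy of themselves. There
   Z = log (e^x e^y) is primitive for the coproduct x \<mapsto> x \<otimes> 1 + 1 \<otimes> x, because e^x e^y is
   grouplike; by the Dynkin-Specht-Wever lemma the degree-n part of a primitive element is 1/n
   times its image under the Dynkin operator, and for Z this is Dynkin's Lie polynomial.
   Evaluating at x := u, y := v modulo each step of the filtration transfers the identity to A,
   and in the Lie case to the image of A under any Lie morphism into an associative algebra. *)

unbundle fps_syntax

section \<open>Series in two tensor factors of words in two letters\<close>

type_synonym biword = "bool list \<times> bool list"

text \<open>A biword (u, v) stands for the tensor u \<otimes> v of two words in the letters x = False and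
  y = True. Series indexed by biwords form the completed tensor square of the algebra of
  noncommutative formal power series in x and y: multiplication concatenates both components.\<close>

datatype 'k tser = TSer (tcoeff: "biword \<Rightarrow> 'k")

lemma tser_eqI: "(\<And>p. tcoeff f p = tcoeff g p) \<Longrightarrow> f = g"
  by (cases f, cases g) auto

definition bw_append :: "biword \<Rightarrow> biword \<Rightarrow> biword" where
  "bw_append a b = (fst a @ fst b, snd a @ snd b)"

definition bw_splits :: "biword \<Rightarrow> (biword \<times> biword) set" where
  "bw_splits p = {(a,b). bw_append a b = p}"

definition bw_size :: "biword \<Rightarrow> nat" where
  "bw_size p = length (fst p) + length (snd p)"

lemma bw_append_assoc: "bw_append (bw_append a b) c = bw_append a (bw_append b c)"
  by (simp add: bw_append_def)

lemma bw_size_append [simp]: "bw_size (bw_append a b) = bw_size a + bw_size b"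
  by (simp add: bw_size_def bw_append_def)

lemma finite_bw_splits [simp]: "finite (bw_splits p)"
proof -
  obtain u v where p: "p = (u,v)" by (cases p)
  let ?cut = "\<lambda>(i,j). ((take i u, take j v), (drop i u, drop j v))"
  have "bw_splits p \<subseteq> ?cut ` ({..length u} \<times> {..length v})"
  proof
    fix x assume "x \<in> bw_splits p"
    then obtain a1 a2 b1 b2 where x: "x = ((a1,a2),(b1,b2))" and e: "a1 @ b1 = u" "a2 @ b2 = v"
      by (cases x) (auto simp: bw_splits_def bw_append_def p)
    show "x \<in> ?cut ` ({..length u} \<times> {..length v})"
      by (rule image_eqI[where x="(length a1, length a2)"]) (use e x in auto)
  qed
  then show ?thesis by (rule finite_subset) auto
qed

lemma sum_bw_splits_assoc:
  "(\<Sum>x\<in>bw_splits p. \<Sum>y\<in>bw_splits (fst x). G (fst y) (snd y) (snd x)) =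
   (\<Sum>x\<in>bw_splits p. \<Sum>y\<in>bw_splits (snd x). G (fst x) (fst y) (snd y))"
proof -
  have "(\<Sum>x\<in>bw_splits p. \<Sum>y\<in>bw_splits (fst x). G (fst y) (snd y) (snd x)) =
        (\<Sum>z\<in>Sigma (bw_splits p) (\<lambda>x. bw_splits (fst x)). G (fst (snd z)) (snd (snd z)) (snd (fst z)))"
    by (subst sum.Sigma) (auto simp: split_def)
  also have "\<dots> = (\<Sum>z\<in>Sigma (bw_splits p) (\<lambda>x. bw_splits (snd x)). G (fst (fst z)) (fst (snd z)) (snd (snd z)))"
    by (rule sum.reindex_bij_witness[where i="\<lambda>((a,y),(b,c)). ((bw_append a b, c),(a,b))"
                                       and j="\<lambda>((x,c),(a,b)). ((a, bw_append b c),(b,c))"])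
       (auto simp: bw_splits_def, (metis bw_append_assoc)+)
  also have "\<dots> = (\<Sum>x\<in>bw_splits p. \<Sum>y\<in>bw_splits (snd x). G (fst x) (fst y) (snd y))"
    by (subst sum.Sigma) (auto simp: split_def)
  finally show ?thesis .
qed

lemma sum_bw_splits_unit_left:
  fixes c :: "'a::comm_ring_1"
  shows "(\<Sum>x\<in>bw_splits p. (if fst x = ([],[]) then c else 0) * G (snd x)) = c * G p"
proof -
  have "(\<Sum>x\<in>bw_splits p. (if fst x = ([],[]) then c else 0) * G (snd x)) =
     (\<Sum>x\<in>bw_splits p. (if x = (([],[]),p) then c * G p else 0))"
    by (rule sum.cong) (auto simp: bw_splits_def bw_append_def)
  also have "\<dots> = c * G p" by (subst sum.delta) (simp, simp add: bw_splits_def bw_append_def)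
  finally show ?thesis .
qed

lemma sum_bw_splits_unit_right:
  fixes c :: "'a::comm_ring_1"
  shows "(\<Sum>x\<in>bw_splits p. G (fst x) * (if snd x = ([],[]) then c else 0)) = G p * c"
proof -
  have "(\<Sum>x\<in>bw_splits p. G (fst x) * (if snd x = ([],[]) then c else 0)) =
     (\<Sum>x\<in>bw_splits p. (if x = (p,([],[])) then G p * c else 0))"
    by (rule sum.cong) (auto simp: bw_splits_def bw_append_def)
  also have "\<dots> = G p * c" by (subst sum.delta) (simp, simp add: bw_splits_def bw_append_def)
  finally show ?thesis .
qed

instantiation tser :: (comm_ring_1) ring_1
begin
definition "0 = TSer (\<lambda>_. 0)"
definition "1 = TSer (\<lambda>p. if p = ([],[]) then 1 else 0)"
definition "f + g = TSer (\<lambda>p. tcoeff f p + tcoeff g p)"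
definition "f - g = TSer (\<lambda>p. tcoeff f p - tcoeff g p)"
definition "- f = TSer (\<lambda>p. - tcoeff f p)"
definition "f * g = TSer (\<lambda>p. \<Sum>x\<in>bw_splits p. tcoeff f (fst x) * tcoeff g (snd x))"
instance
proof
  show "(0::'a tser) \<noteq> 1"
  proof
    assume "(0::'a tser) = 1"
    then have "tcoeff (0::'a tser) ([],[]) = tcoeff 1 ([],[])" by simp
    then show False by (simp add: zero_tser_def one_tser_def)
  qed
next
  fix a b c :: "'a tser"
  show "a * b * c = a * (b * c)"
    by (rule tser_eqI) (simp add: times_tser_def sum_distrib_left sum_distrib_right
          mult.assoc sum_bw_splits_assoc[where G="\<lambda>x y z. tcoeff a x * (tcoeff b y * tcoeff c z)"])
qed (auto intro!: tser_eqI simp: zero_tser_def one_tser_def plus_tser_def minus_tser_def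
       uminus_tser_def times_tser_def sum_bw_splits_unit_left sum_bw_splits_unit_right
       sum.distrib distrib_left distrib_right)
end

lemma tcoeff_0 [simp]: "tcoeff 0 p = 0" by (simp add: zero_tser_def)
lemma tcoeff_1: "tcoeff 1 p = (if p = ([],[]) then 1 else 0)" by (simp add: one_tser_def)
lemma tcoeff_add [simp]: "tcoeff (f + g) p = tcoeff f p + tcoeff g p" by (simp add: plus_tser_def)
lemma tcoeff_diff [simp]: "tcoeff (f - g) p = tcoeff f p - tcoeff g p" by (simp add: minus_tser_def)
lemma tcoeff_uminus [simp]: "tcoeff (- f) p = - tcoeff f p" by (simp add: uminus_tser_def)
lemma tcoeff_mult: "tcoeff (f * g) p = (\<Sum>x\<in>bw_splits p. tcoeff f (fst x) * tcoeff g (snd x))"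
  by (simp add: times_tser_def)
lemma tcoeff_sum: "tcoeff (sum F A) p = (\<Sum>i\<in>A. tcoeff (F i) p)"
  by (induction A rule: infinite_finite_induct) auto

definition tconst :: "'k::comm_ring_1 \<Rightarrow> 'k tser" where
  "tconst c = TSer (\<lambda>p. if p = ([],[]) then c else 0)"

lemma tcoeff_tconst: "tcoeff (tconst c) p = (if p = ([],[]) then c else 0)"
  by (simp add: tconst_def)

lemma tcoeff_tconst_mult [simp]: "tcoeff (tconst c * f) p = c * tcoeff f p"
  by (simp add: tcoeff_mult tcoeff_tconst sum_bw_splits_unit_left[where G="tcoeff f"])

lemma tcoeff_mult_tconst [simp]: "tcoeff (f * tconst c) p = tcoeff f p * c"
  by (simp add: tcoeff_mult tcoeff_tconst sum_bw_splits_unit_right[where G="tcoeff f"])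

lemma tconst_add: "tconst (a + b) = tconst a + tconst b" by (rule tser_eqI) (simp add: tcoeff_tconst)
lemma tconst_0 [simp]: "tconst 0 = 0" by (rule tser_eqI) (simp add: tcoeff_tconst)
lemma tconst_1 [simp]: "tconst 1 = 1" by (rule tser_eqI) (simp add: tcoeff_tconst tcoeff_1)
lemma tconst_mult: "tconst (a * b) = tconst a * tconst b" by (rule tser_eqI) (simp add: tcoeff_tconst)
lemma tconst_commute: "tconst c * f = f * tconst c" by (rule tser_eqI) (simp add: mult.commute)
lemma tconst_sum: "tconst (sum f A) = (\<Sum>i\<in>A. tconst (f i))"
  by (induction A rule: infinite_finite_induct) (auto simp: tconst_add)

lemma tconst_mult_mult: "tconst a * f * (tconst b * g) = tconst (a * b) * (f * g)"
proof -
  have "tconst a * f * (tconst b * g) = tconst a * ((tconst b * f) * g)"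
    by (simp add: mult.assoc tconst_commute[of b f])
  then show ?thesis by (simp add: tconst_mult mult.assoc)
qed

lemma of_nat_tser: "(of_nat n :: 'k::comm_ring_1 tser) = tconst (of_nat n)"
  by (induction n) (simp_all add: tconst_add)

definition order_ge :: "nat \<Rightarrow> 'k::comm_ring_1 tser \<Rightarrow> bool" where
  "order_ge n f \<longleftrightarrow> (\<forall>p. bw_size p < n \<longrightarrow> tcoeff f p = 0)"

definition eq_upto :: "nat \<Rightarrow> 'k::comm_ring_1 tser \<Rightarrow> 'k tser \<Rightarrow> bool" where
  "eq_upto n f g \<longleftrightarrow> order_ge n (f - g)"

lemma order_ge_0 [simp]: "order_ge 0 f" by (simp add: order_ge_def)
lemma order_ge_zero [simp]: "order_ge n 0" by (simp add: order_ge_def)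
lemma order_ge_tcoeff: "order_ge n f \<Longrightarrow> bw_size p < n \<Longrightarrow> tcoeff f p = 0"
  unfolding order_ge_def by blast
lemma order_ge_add: "order_ge n f \<Longrightarrow> order_ge n g \<Longrightarrow> order_ge n (f + g)"
  by (simp add: order_ge_def)
lemma order_ge_diff: "order_ge n f \<Longrightarrow> order_ge n g \<Longrightarrow> order_ge n (f - g)"
  by (simp add: order_ge_def)
lemma order_ge_uminus: "order_ge n f \<Longrightarrow> order_ge n (- f)"
  by (simp add: order_ge_def)
lemma order_ge_mono: "m \<le> n \<Longrightarrow> order_ge n f \<Longrightarrow> order_ge m f"
  by (simp add: order_ge_def)
lemma order_ge_tconst_mult: "order_ge n f \<Longrightarrow> order_ge n (tconst c * f)"
  by (simp add: order_ge_def)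
lemma order_ge_sum: "(\<And>i. i \<in> A \<Longrightarrow> order_ge n (f i)) \<Longrightarrow> order_ge n (sum f A)"
  by (induction A rule: infinite_finite_induct) (auto intro: order_ge_add)

lemma order_ge_mult: "order_ge m f \<Longrightarrow> order_ge n g \<Longrightarrow> order_ge (m + n) (f * g)"
  unfolding order_ge_def tcoeff_mult
proof (intro allI impI sum.neutral ballI)
  fix p x assume f: "\<forall>p. bw_size p < m \<longrightarrow> tcoeff f p = 0"
    and g: "\<forall>p. bw_size p < n \<longrightarrow> tcoeff g p = 0"
    and p: "bw_size p < m + n" and x: "x \<in> bw_splits p"
  then have "bw_size (fst x) + bw_size (snd x) = bw_size p"
    by (auto simp: bw_splits_def bw_size_def bw_append_def)
  then have "bw_size (fst x) < m \<or> bw_size (snd x) < n" using p by linarith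
  then show "tcoeff f (fst x) * tcoeff g (snd x) = 0"
    using f g by (metis mult_zero_left mult_zero_right)
qed

lemma order_ge_mult_left: "order_ge n f \<Longrightarrow> order_ge n (f * g)"
  using order_ge_mult[of n f 0 g] by simp
lemma order_ge_mult_right: "order_ge n g \<Longrightarrow> order_ge n (f * g)"
  using order_ge_mult[of 0 f n g] by simp

lemma order_ge_power: "order_ge 1 f \<Longrightarrow> order_ge n (f ^ n)"
proof (induction n)
  case (Suc n)
  then show ?case using order_ge_mult[of 1 f n "f ^ n"] by simp
qed simp

lemma order_ge_power_ge: "order_ge 1 f \<Longrightarrow> n \<le> k \<Longrightarrow> order_ge n (f ^ k)"
  using order_ge_mono order_ge_power by blast

lemma order_ge_all_eq_0: "(\<And>n. order_ge n f) \<Longrightarrow> f = 0"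
  by (rule tser_eqI) (metis order_ge_tcoeff lessI tcoeff_0)

lemma eq_upto_refl [simp]: "eq_upto n f f"
  by (simp add: eq_upto_def)
lemma eq_upto_sym: "eq_upto n f g \<Longrightarrow> eq_upto n g f"
  unfolding eq_upto_def using order_ge_uminus[of n "f - g"] by simp
lemma eq_upto_trans [trans]: "eq_upto n f g \<Longrightarrow> eq_upto n g h \<Longrightarrow> eq_upto n f h"
  unfolding eq_upto_def using order_ge_add[of n "f - g" "g - h"] by simp
lemma eq_upto_diff: "eq_upto n f f' \<Longrightarrow> eq_upto n g g' \<Longrightarrow> eq_upto n (f - g) (f' - g')"
  unfolding eq_upto_def using order_ge_diff[of n "f - f'" "g - g'"] by (simp add: algebra_simps)
lemma eq_upto_mult: "eq_upto n f f' \<Longrightarrow> eq_upto n g g' \<Longrightarrow> eq_upto n (f * g) (f' * g')"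
  unfolding eq_upto_def
  using order_ge_add[OF order_ge_mult_left[of n "f - f'" g] order_ge_mult_right[of n "g - g'" f']]
  by (simp add: algebra_simps)
lemma eq_upto_power: "eq_upto n f f' \<Longrightarrow> eq_upto n (f ^ k) (f' ^ k)"
  by (induction k) (auto intro: eq_upto_mult)
lemma eq_upto_sum: "(\<And>i. i \<in> A \<Longrightarrow> eq_upto n (f i) (g i)) \<Longrightarrow> eq_upto n (sum f A) (sum g A)"
  unfolding eq_upto_def by (simp add: order_ge_sum flip: sum_subtractf)
lemma eq_upto_order_ge: "order_ge n f \<Longrightarrow> eq_upto n (g + f) g"
  by (simp add: eq_upto_def)
lemma eq_upto_tconst_mult: "eq_upto n f g \<Longrightarrow> eq_upto n (tconst c * f) (tconst c * g)"
  by (rule eq_upto_mult) auto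

lemma eq_upto_all_eq: "(\<And>K. eq_upto (Suc K) f g) \<Longrightarrow> f = g"
  using order_ge_all_eq_0[of "f - g"] order_ge_mono[of _ "Suc _" "f - g"]
  unfolding eq_upto_def by (metis eq_iff_diff_eq_0 lessI less_imp_le_nat)

lemma sum_square_split:
  fixes G :: "nat \<Rightarrow> nat \<Rightarrow> 'a::comm_monoid_add"
  shows "(\<Sum>i\<le>K. \<Sum>j\<le>K. G i j) =
     (\<Sum>n\<le>K. \<Sum>i\<le>n. G i (n - i)) + (\<Sum>(i,j)\<in>{(i,j). i \<le> K \<and> j \<le> K \<and> K < i + j}. G i j)"
proof -
  have fin: "finite ({..K} \<times> {..K})" by simp
  have "(\<Sum>i\<le>K. \<Sum>j\<le>K. G i j) = (\<Sum>(i,j)\<in>{..K} \<times> {..K}. G i j)"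
    by (simp add: sum.cartesian_product)
  also have "{..K} \<times> {..K} = {(i,j). i + j \<le> K} \<union> {(i,j). i \<le> K \<and> j \<le> K \<and> K < i + j}"
    by auto
  also have "(\<Sum>(i,j)\<in>\<dots>. G i j) = (\<Sum>(i,j)\<in>{(i,j). i + j \<le> K}. G i j) +
      (\<Sum>(i,j)\<in>{(i,j). i \<le> K \<and> j \<le> K \<and> K < i + j}. G i j)"
    by (rule sum.union_disjoint) (auto intro: finite_subset[OF _ fin])
  also have "(\<Sum>(i,j)\<in>{(i,j). i + j \<le> K}. G i j) = (\<Sum>n\<le>K. \<Sum>i\<le>n. G i (n - i))"
    by (rule sum.triangle_reindex_eq)
  finally show ?thesis .
qed

lemma eq_upto_cauchy_product:
  fixes A B :: "nat \<Rightarrow> 'k::comm_ring_1 tser"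
  assumes "\<And>i j. order_ge (i + j) (A i * B j)"
  shows "eq_upto (Suc K) ((\<Sum>i\<le>K. A i) * (\<Sum>j\<le>K. B j)) (\<Sum>n\<le>K. \<Sum>i\<le>n. A i * B (n - i))"
proof -
  have "(\<Sum>i\<le>K. A i) * (\<Sum>j\<le>K. B j) = (\<Sum>n\<le>K. \<Sum>i\<le>n. A i * B (n - i)) +
      (\<Sum>(i,j)\<in>{(i,j). i \<le> K \<and> j \<le> K \<and> K < i + j}. A i * B j)"
    by (simp add: sum_product sum_square_split)
  moreover have "order_ge (Suc K) (\<Sum>(i,j)\<in>{(i,j). i \<le> K \<and> j \<le> K \<and> K < i + j}. A i * B j)"
    by (rule order_ge_sum) (auto intro: order_ge_mono[OF _ assms])
  ultimately show ?thesis by (simp add: eq_upto_order_ge)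
qed

lemma binomial_commuting:
  fixes a b :: "'a::ring_1"
  assumes ab: "a * b = b * a"
  shows "(a + b) ^ n = (\<Sum>k\<le>n. of_nat (n choose k) * a ^ k * b ^ (n - k))"
proof (induction n)
  case (Suc n)
  have a_left: "a * (of_nat c * a ^ k * b ^ m) = of_nat c * a ^ Suc k * b ^ m" for c k m
    by (simp add: mult.assoc mult_of_nat_commute)
  have b_left: "b * (of_nat c * a ^ k * b ^ m) = of_nat c * a ^ k * b ^ Suc m" for c k m
  proof -
    have "b * (of_nat c * a ^ k * b ^ m) = of_nat c * (b * a ^ k) * b ^ m"
      by (simp add: mult.assoc mult_of_nat_commute)
    also have "\<dots> = of_nat c * a ^ k * b ^ Suc m"
      by (simp add: power_commuting_commutes[OF ab, symmetric] mult.assoc)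
    finally show ?thesis .
  qed
  have "(a + b) ^ Suc n = a * (\<Sum>k\<le>n. of_nat (n choose k) * a ^ k * b ^ (n - k)) +
      b * (\<Sum>k\<le>n. of_nat (n choose k) * a ^ k * b ^ (n - k))"
    using Suc.IH by (simp add: distrib_right)
  also have "\<dots> = (\<Sum>k\<le>n. of_nat (n choose k) * a ^ Suc k * b ^ (n - k)) +
      (\<Sum>k\<le>n. of_nat (n choose k) * a ^ k * b ^ Suc (n - k))"
    by (simp only: sum_distrib_left a_left b_left)
  also have "(\<Sum>k\<le>n. of_nat (n choose k) * a ^ k * b ^ Suc (n - k)) =
      (\<Sum>k\<le>Suc n. of_nat (n choose k) * a ^ k * b ^ (Suc n - k))"
    by (simp add: Suc_diff_le binomial_eq_0)
  also have "\<dots> = b ^ Suc n + (\<Sum>k\<le>n. of_nat (n choose Suc k) * a ^ Suc k * b ^ (n - k))"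
    by (subst sum.atMost_Suc_shift) simp
  also have "(\<Sum>k\<le>n. of_nat (n choose k) * a ^ Suc k * b ^ (n - k)) + \<dots> =
      b ^ Suc n + (\<Sum>k\<le>n. of_nat ((n choose k) + (n choose Suc k)) * a ^ Suc k * b ^ (n - k))"
    by (simp add: distrib_right sum.distrib)
  also have "\<dots> = (\<Sum>k\<le>Suc n. of_nat (Suc n choose k) * a ^ k * b ^ (Suc n - k))"
    by (subst sum.atMost_Suc_shift) simp
  finally show ?case .
qed simp
text \<open>fps_subst h a is the series a(h); it is meant for h without constant term, which makes
  each coefficient a finite sum.\<close>

definition fps_subst :: "'k::field_char_0 tser \<Rightarrow> 'k fps \<Rightarrow> 'k tser" where
  "fps_subst h a = TSer (\<lambda>p. \<Sum>i\<le>bw_size p. a$i * tcoeff (h^i) p)"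

definition fps_subst_trunc :: "'k::field_char_0 tser \<Rightarrow> 'k fps \<Rightarrow> nat \<Rightarrow> 'k tser" where
  "fps_subst_trunc h a K = (\<Sum>i\<le>K. tconst (a$i) * h^i)"

lemma tcoeff_fps_subst: "tcoeff (fps_subst h a) p = (\<Sum>i\<le>bw_size p. a$i * tcoeff (h^i) p)"
  by (simp add: fps_subst_def)

lemma sum_atMost_extend:
  fixes m K :: nat
  assumes "m \<le> K" "\<And>i. m < i \<Longrightarrow> i \<le> K \<Longrightarrow> g i = 0"
  shows "(\<Sum>i\<le>K. g i) = (\<Sum>i\<le>m. g i)"
  by (rule sum.mono_neutral_right) (use assms in auto)

lemma fps_subst_eq_upto_trunc:
  assumes h: "order_ge 1 h"
  shows "eq_upto (Suc K) (fps_subst h a) (fps_subst_trunc h a K)"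
  unfolding eq_upto_def order_ge_def
proof (intro allI impI)
  fix p :: biword assume "bw_size p < Suc K"
  then have pK: "bw_size p \<le> K" by simp
  have "tcoeff (fps_subst_trunc h a K) p = (\<Sum>i\<le>K. a$i * tcoeff (h^i) p)"
    by (simp add: fps_subst_trunc_def tcoeff_sum)
  also have "\<dots> = (\<Sum>i\<le>bw_size p. a$i * tcoeff (h^i) p)"
  proof (rule sum_atMost_extend[OF pK])
    fix i assume "bw_size p < i"
    then show "a $ i * tcoeff (h ^ i) p = 0"
      using order_ge_power[OF h, of i] unfolding order_ge_def by (metis mult_zero_right)
  qed
  finally show "tcoeff (fps_subst h a - fps_subst_trunc h a K) p = 0" by (simp add: tcoeff_fps_subst)
qed

lemma fps_subst_add: "fps_subst h (a + b) = fps_subst h a + fps_subst h b"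
  by (rule tser_eqI) (simp add: tcoeff_fps_subst distrib_right sum.distrib)

lemma fps_subst_0 [simp]: "fps_subst h 0 = 0"
  by (rule tser_eqI) (simp add: tcoeff_fps_subst)

lemma fps_subst_const_mult: "fps_subst h (fps_const c * a) = tconst c * fps_subst h a"
  by (rule tser_eqI) (simp add: tcoeff_fps_subst sum_distrib_left mult.assoc)

lemma fps_subst_sum: "fps_subst h (sum f A) = (\<Sum>i\<in>A. fps_subst h (f i))"
  by (induction A rule: infinite_finite_induct) (auto simp: fps_subst_add)

lemma fps_subst_eq_upto_cong:
  assumes "\<And>i. i \<le> K \<Longrightarrow> a$i = b$i"
  shows "eq_upto (Suc K) (fps_subst h a) (fps_subst h b)"
  unfolding eq_upto_def order_ge_def
  by (auto simp: tcoeff_fps_subst assms intro!: sum.cong)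

lemma order_ge_fps_subst: "order_ge 1 h \<Longrightarrow> a$0 = 0 \<Longrightarrow> order_ge 1 (fps_subst h a)"
  by (auto simp: order_ge_def tcoeff_fps_subst bw_size_def tcoeff_1)

lemma fps_subst_mult:
  assumes h: "order_ge 1 h"
  shows "fps_subst h (a * b) = fps_subst h a * fps_subst h b"
proof (rule eq_upto_all_eq)
  fix K
  define A where "A i = tconst (a$i) * h^i" for i
  define B where "B i = tconst (b$i) * h^i" for i
  have AB: "A i * B j = tconst (a$i * b$j) * h^(i+j)" for i j
    by (simp add: A_def B_def tconst_mult_mult power_add)
  have ord_AB: "order_ge (i + j) (A i * B j)" for i j
    unfolding AB by (rule order_ge_tconst_mult) (rule order_ge_power[OF h])
  have "eq_upto (Suc K) (fps_subst h a * fps_subst h b) (fps_subst_trunc h a K * fps_subst_trunc h b K)"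
    by (rule eq_upto_mult; rule fps_subst_eq_upto_trunc[OF h])
  moreover have "fps_subst_trunc h a K * fps_subst_trunc h b K = (\<Sum>i\<le>K. A i) * (\<Sum>j\<le>K. B j)"
    by (simp add: fps_subst_trunc_def A_def B_def)
  moreover have "eq_upto (Suc K) ((\<Sum>i\<le>K. A i) * (\<Sum>j\<le>K. B j))
                   (\<Sum>n\<le>K. \<Sum>i\<le>n. A i * B (n - i))"
    by (rule eq_upto_cauchy_product) (rule ord_AB)
  moreover have "(\<Sum>n\<le>K. \<Sum>i\<le>n. A i * B (n - i)) = fps_subst_trunc h (a * b) K"
    unfolding fps_subst_trunc_def AB
  proof (rule sum.cong[OF refl])
    fix n assume "n \<in> {..K}"
    have "(\<Sum>i\<le>n. tconst (a $ i * b $ (n - i)) * h ^ (i + (n - i))) =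
          (\<Sum>i\<le>n. tconst (a $ i * b $ (n - i)) * h ^ n)"
      by (rule sum.cong) auto
    also have "\<dots> = tconst ((a * b) $ n) * h ^ n"
      by (simp add: fps_mult_nth tconst_sum sum_distrib_right atMost_atLeast0)
    finally show "(\<Sum>i\<le>n. tconst (a $ i * b $ (n - i)) * h ^ (i + (n - i))) = tconst ((a * b) $ n) * h ^ n" .
  qed
  moreover have "eq_upto (Suc K) (fps_subst h (a * b)) (fps_subst_trunc h (a * b) K)"
    by (rule fps_subst_eq_upto_trunc[OF h])
  ultimately show "eq_upto (Suc K) (fps_subst h (a * b)) (fps_subst h a * fps_subst h b)"
    by (metis eq_upto_sym eq_upto_trans)
qed

lemma fps_subst_X: "order_ge 1 h \<Longrightarrow> fps_subst h fps_X = h"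
proof (rule tser_eqI)
  fix p assume h: "order_ge 1 h"
  show "tcoeff (fps_subst h fps_X) p = tcoeff h p"
  proof (cases "bw_size p = 0")
    case True
    then show ?thesis using h order_ge_tcoeff[OF h, of p] by (simp add: tcoeff_fps_subst)
  next
    case False
    then have "(\<Sum>i\<le>bw_size p. fps_X $ i * tcoeff (h ^ i) p) = (\<Sum>i\<in>{1}. fps_X $ i * tcoeff (h ^ i) p)"
      by (intro sum.mono_neutral_right) (auto simp: fps_X_def)
    then show ?thesis by (simp add: tcoeff_fps_subst fps_X_def)
  qed
qed

lemma fps_subst_const: "fps_subst h (fps_const c) = tconst c"
proof (rule tser_eqI)
  fix p
  have "(\<Sum>i\<le>bw_size p. fps_const c $ i * tcoeff (h ^ i) p) = (\<Sum>i\<in>{0}. fps_const c $ i * tcoeff (h ^ i) p)"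
    by (intro sum.mono_neutral_right) auto
  then show "tcoeff (fps_subst h (fps_const c)) p = tcoeff (tconst c) p"
    by (simp add: tcoeff_fps_subst tcoeff_tconst tcoeff_1)
qed

lemma fps_subst_1 [simp]: "fps_subst h 1 = 1"
  by (metis fps_const_1_eq_1 fps_subst_const tconst_1)

lemma fps_subst_power: "order_ge 1 h \<Longrightarrow> fps_subst h (a ^ n) = fps_subst h a ^ n"
  by (induction n) (simp_all add: fps_subst_mult)

lemma fps_subst_compose:
  assumes h: "order_ge 1 h" and b0: "b$0 = 0"
  shows "fps_subst h (a oo b) = fps_subst (fps_subst h b) a"
proof (rule eq_upto_all_eq)
  fix K
  have hb: "order_ge 1 (fps_subst h b)" by (rule order_ge_fps_subst[OF h b0])
  define c where "c = (\<Sum>i\<le>K. fps_const (a$i) * b^i)"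
  have "eq_upto (Suc K) (fps_subst (fps_subst h b) a) (fps_subst_trunc (fps_subst h b) a K)" by (rule fps_subst_eq_upto_trunc[OF hb])
  moreover have "fps_subst_trunc (fps_subst h b) a K = fps_subst h c"
    by (simp add: fps_subst_trunc_def c_def fps_subst_sum fps_subst_const_mult fps_subst_power[OF h])
  moreover have "eq_upto (Suc K) (fps_subst h c) (fps_subst h (a oo b))"
  proof (rule fps_subst_eq_upto_cong)
    fix n assume n: "n \<le> K"
    have "c $ n = (\<Sum>i\<le>K. a$i * (b^i) $ n)" by (simp add: c_def fps_sum_nth)
    also have "\<dots> = (\<Sum>i\<le>n. a$i * (b^i) $ n)"
      by (rule sum_atMost_extend[OF n]) (use startsby_zero_power_prefix[OF b0] in auto)
    also have "\<dots> = (a oo b) $ n" by (simp add: fps_compose_nth atMost_atLeast0)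
    finally show "c $ n = (a oo b) $ n" .
  qed
  ultimately show "eq_upto (Suc K) (fps_subst h (a oo b)) (fps_subst (fps_subst h b) a)"
    by (metis eq_upto_sym eq_upto_trans)
qed

definition texp :: "'k::field_char_0 tser \<Rightarrow> 'k tser" where
  "texp f = fps_subst f (fps_exp 1)"

definition tln1p :: "'k::field_char_0 tser \<Rightarrow> 'k tser" where
  "tln1p h = fps_subst h (fps_ln 1)"

lemma fps_exp_compose_ln: "(fps_exp (1::'k::field_char_0)) oo fps_ln 1 = fps_X + 1"
proof -
  let ?E = "fps_exp (1::'k)"
  have "(?E - 1) oo fps_ln 1 = fps_X"
    unfolding fps_ln_fps_exp_inv[of "1::'k", simplified]
    by (rule fps_inv_right) simp_all
  then have "(fps_exp (1::'k) oo fps_ln 1) - 1 = fps_X" by (simp add: fps_compose_sub_distrib)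
  then show ?thesis by (metis add.commute diff_add_cancel)
qed

lemma texp_tln1p: "order_ge 1 h \<Longrightarrow> texp (tln1p h) = 1 + h"
  unfolding texp_def tln1p_def
  by (simp add: fps_subst_compose[symmetric] fps_exp_compose_ln fps_subst_add fps_subst_X)

lemma order_ge_tln1p: "order_ge 1 h \<Longrightarrow> order_ge 1 (tln1p h)"
  unfolding tln1p_def by (rule order_ge_fps_subst) simp_all

lemma texp_eq_upto_trunc: "order_ge 1 f \<Longrightarrow> eq_upto (Suc K) (texp f) (\<Sum>i\<le>K. tconst (1 / fact i) * f^i)"
  using fps_subst_eq_upto_trunc[of f K "fps_exp 1"] by (simp add: texp_def fps_subst_trunc_def)

lemma exp_series_term_add:
  fixes a b :: "'k::field_char_0 tser"
  assumes ab: "a * b = b * a"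
  shows "tconst (1 / fact n) * (a + b) ^ n =
    (\<Sum>i\<le>n. (tconst (1 / fact i) * a ^ i) * (tconst (1 / fact (n - i)) * b ^ (n - i)))"
proof -
  have coeff: "tconst (1 / fact n :: 'k) * tconst (of_nat (n choose i)) = tconst (1 / fact i * (1 / fact (n - i)))"
    if "i \<le> n" for i
  proof -
    have "1 / fact n * of_nat (n choose i) = (1 / fact i * (1 / fact (n - i)) :: 'k)"
      using that by (simp add: binomial_fact field_simps)
    then show ?thesis by (simp only: flip: tconst_mult)
  qed
  have "tconst (1 / fact n) * (a + b) ^ n =
      (\<Sum>i\<le>n. tconst (1 / fact n) * tconst (of_nat (n choose i)) * (a ^ i * b ^ (n - i)))"
    by (simp add: binomial_commuting[OF ab] sum_distrib_left of_nat_tser mult.assoc)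
  also have "\<dots> = (\<Sum>i\<le>n. tconst (1 / fact i * (1 / fact (n - i))) * (a ^ i * b ^ (n - i)))"
    by (rule sum.cong) (simp_all add: coeff)
  finally show ?thesis by (simp only: tconst_mult_mult)
qed

lemma texp_add:
  assumes a: "order_ge 1 a" and b: "order_ge 1 b" and ab: "a * b = b * a"
  shows "texp (a + b) = texp a * texp b"
proof (rule eq_upto_all_eq)
  fix K
  define A where "A i = tconst (1 / fact i) * a ^ i" for i
  define B where "B i = tconst (1 / fact i) * b ^ i" for i
  have "order_ge (i + j) (A i * B j)" for i j
    unfolding A_def B_def tconst_mult_mult
    by (intro order_ge_tconst_mult order_ge_mult order_ge_power a b)
  then have "eq_upto (Suc K) ((\<Sum>i\<le>K. A i) * (\<Sum>j\<le>K. B j)) (\<Sum>n\<le>K. \<Sum>i\<le>n. A i * B (n - i))"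
    by (rule eq_upto_cauchy_product)
  moreover have "eq_upto (Suc K) (texp a * texp b) ((\<Sum>i\<le>K. A i) * (\<Sum>j\<le>K. B j))"
    unfolding A_def B_def by (intro eq_upto_mult texp_eq_upto_trunc a b)
  moreover have "(\<Sum>n\<le>K. \<Sum>i\<le>n. A i * B (n - i)) = (\<Sum>n\<le>K. tconst (1 / fact n) * (a + b) ^ n)"
    by (simp add: A_def B_def exp_series_term_add[OF ab])
  moreover have "eq_upto (Suc K) (texp (a + b)) (\<Sum>n\<le>K. tconst (1 / fact n) * (a + b) ^ n)"
    using a b by (intro texp_eq_upto_trunc order_ge_add)
  ultimately show "eq_upto (Suc K) (texp (a + b)) (texp a * texp b)"
    by (metis eq_upto_sym eq_upto_trans)
qed

lemma finite_words_le [simp]: "finite {w::bool list. length w \<le> n}"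
  using finite_lists_length_le[of "UNIV::bool set" n] by simp

lemma finite_words_eq [simp]: "finite {w::bool list. length w = n}"
  by (rule finite_subset[OF _ finite_words_le[of n]]) auto

definition word_pairs :: "nat \<Rightarrow> biword set" where
  "word_pairs n = {(w1,w2). length w1 + length w2 = n}"

lemma finite_word_pairs [simp]: "finite (word_pairs n)"
  by (rule finite_subset[of _ "{w. length w \<le> n} \<times> {w. length w \<le> n}"]) (auto simp: word_pairs_def)

definition left_only :: "'k::comm_ring_1 tser \<Rightarrow> bool" where
  "left_only f \<longleftrightarrow> (\<forall>u v. v \<noteq> [] \<longrightarrow> tcoeff f (u,v) = 0)"

definition right_only :: "'k::comm_ring_1 tser \<Rightarrow> bool" where
  "right_only f \<longleftrightarrow> (\<forall>u v. u \<noteq> [] \<longrightarrow> tcoeff f (u,v) = 0)"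

definition tswap :: "'k::comm_ring_1 tser \<Rightarrow> 'k tser" where
  "tswap f = TSer (\<lambda>p. tcoeff f (snd p, fst p))"

lemma tcoeff_tswap: "tcoeff (tswap f) (u,v) = tcoeff f (v,u)" by (simp add: tswap_def)
lemma tcoeff_tswap': "tcoeff (tswap f) p = tcoeff f (snd p, fst p)" by (simp add: tswap_def)

lemma bw_splits_left: "bw_splits (w,[]) = (\<lambda>i. ((take i w, []), (drop i w, []))) ` {..length w}"
proof (rule set_eqI, rule iffI)
  fix x assume "x \<in> bw_splits (w,[])"
  then obtain a b where x: "x = ((a,[]),(b,[]))" and "a @ b = w"
    by (cases x) (auto simp: bw_splits_def bw_append_def)
  then show "x \<in> (\<lambda>i. ((take i w, []), (drop i w, []))) ` {..length w}"
    by (intro image_eqI[where x="length a"]) auto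
qed (auto simp: bw_splits_def bw_append_def)

lemma tcoeff_mult_left:
  "tcoeff (f * g) (w,[]) = (\<Sum>i\<le>length w. tcoeff f (take i w, []) * tcoeff g (drop i w, []))"
proof -
  have inj: "inj_on (\<lambda>i. ((take i w, []::bool list), (drop i w, []::bool list))) {..length w}"
    by (rule inj_onI) (metis atMost_iff length_take min.absorb2 prod.inject)
  show ?thesis unfolding tcoeff_mult bw_splits_left by (simp add: sum.reindex[OF inj])
qed

lemma left_only_1 [simp]: "left_only 1" by (simp add: left_only_def tcoeff_1)
lemma left_only_diff: "left_only f \<Longrightarrow> left_only g \<Longrightarrow> left_only (f - g)" by (simp add: left_only_def)
lemma left_only_mult: "left_only f \<Longrightarrow> left_only g \<Longrightarrow> left_only (f * g)"
  unfolding left_only_def tcoeff_mult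
proof (intro allI impI sum.neutral ballI)
  fix u v x assume f: "\<forall>u v. v \<noteq> [] \<longrightarrow> tcoeff f (u, v) = 0" and g: "\<forall>u v. v \<noteq> [] \<longrightarrow> tcoeff g (u, v) = 0"
    and v: "v \<noteq> []" and x: "x \<in> bw_splits (u, v)"
  then have "snd (fst x) \<noteq> [] \<or> snd (snd x) \<noteq> []" by (auto simp: bw_splits_def bw_append_def)
  then show "tcoeff f (fst x) * tcoeff g (snd x) = 0" using f g
    by (metis mult_zero_left mult_zero_right prod.collapse)
qed
lemma left_only_power: "left_only f \<Longrightarrow> left_only (f ^ n)" by (induction n) (auto intro: left_only_mult)
lemma left_only_fps_subst: "left_only h \<Longrightarrow> left_only (fps_subst h a)"
  using left_only_power[of h] by (simp add: left_only_def tcoeff_fps_subst)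
lemma left_only_texp: "left_only h \<Longrightarrow> left_only (texp h)" by (simp add: texp_def left_only_fps_subst)
lemma left_only_tln1p: "left_only h \<Longrightarrow> left_only (tln1p h)" by (simp add: tln1p_def left_only_fps_subst)

lemma tcoeff_mult_left_right:
  assumes f: "left_only f" and g: "right_only g"
  shows "tcoeff (f * g) (u,v) = tcoeff f (u,[]) * tcoeff g ([],v)"
    and "tcoeff (g * f) (u,v) = tcoeff f (u,[]) * tcoeff g ([],v)"
proof -
  have "tcoeff (f * g) (u,v) = (\<Sum>x\<in>bw_splits (u,v). if x = ((u,[]),([],v)) then tcoeff f (u,[]) * tcoeff g ([],v) else 0)"
    unfolding tcoeff_mult
  proof (rule sum.cong[OF refl])
    fix x assume x: "x \<in> bw_splits (u,v)"
    obtain a1 a2 b1 b2 where xx: "x = ((a1,a2),(b1,b2))" by (metis prod.collapse)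
    show "tcoeff f (fst x) * tcoeff g (snd x) = (if x = ((u,[]),([],v)) then tcoeff f (u,[]) * tcoeff g ([],v) else 0)"
    proof (cases "a2 = [] \<and> b1 = []")
      case True then show ?thesis using x xx by (auto simp: bw_splits_def bw_append_def)
    next
      case False then show ?thesis using f g xx unfolding left_only_def right_only_def by auto
    qed
  qed
  also have "\<dots> = tcoeff f (u,[]) * tcoeff g ([],v)"
    by (subst sum.delta) (simp, simp add: bw_splits_def bw_append_def)
  finally show "tcoeff (f * g) (u,v) = tcoeff f (u,[]) * tcoeff g ([],v)" .
  have "tcoeff (g * f) (u,v) = (\<Sum>x\<in>bw_splits (u,v). if x = (([],v),(u,[])) then tcoeff f (u,[]) * tcoeff g ([],v) else 0)"
    unfolding tcoeff_mult
  proof (rule sum.cong[OF refl])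
    fix x assume x: "x \<in> bw_splits (u,v)"
    obtain a1 a2 b1 b2 where xx: "x = ((a1,a2),(b1,b2))" by (metis prod.collapse)
    show "tcoeff g (fst x) * tcoeff f (snd x) = (if x = (([],v),(u,[])) then tcoeff f (u,[]) * tcoeff g ([],v) else 0)"
    proof (cases "a1 = [] \<and> b2 = []")
      case True then show ?thesis using x xx by (auto simp: bw_splits_def bw_append_def mult.commute)
    next
      case False then show ?thesis using f g xx unfolding left_only_def right_only_def by auto
    qed
  qed
  also have "\<dots> = tcoeff f (u,[]) * tcoeff g ([],v)"
    by (subst sum.delta) (simp, simp add: bw_splits_def bw_append_def)
  finally show "tcoeff (g * f) (u,v) = tcoeff f (u,[]) * tcoeff g ([],v)" .
qed

lemma left_right_commute: "left_only f \<Longrightarrow> right_only g \<Longrightarrow> f * g = g * f"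
  by (rule tser_eqI) (metis tcoeff_mult_left_right prod.collapse)

lemma tswap_mult: "tswap (f * g) = tswap f * tswap g"
proof (rule tser_eqI)
  fix p :: "biword"
  let ?s = "\<lambda>q::biword. (snd q, fst q)"
  have "tcoeff (tswap (f * g)) p = (\<Sum>x\<in>bw_splits (?s p). tcoeff f (fst x) * tcoeff g (snd x))"
    by (simp add: tswap_def tcoeff_mult)
  also have "\<dots> = (\<Sum>x\<in>bw_splits p. tcoeff f (?s (fst x)) * tcoeff g (?s (snd x)))"
    by (rule sum.reindex_bij_witness[where i="\<lambda>x. (?s (fst x), ?s (snd x))" and j="\<lambda>x. (?s (fst x), ?s (snd x))"])
       (auto simp: bw_splits_def bw_append_def)
  also have "\<dots> = tcoeff (tswap f * tswap g) p" by (simp add: tswap_def tcoeff_mult)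
  finally show "tcoeff (tswap (f * g)) p = tcoeff (tswap f * tswap g) p" .
qed
lemma tswap_1 [simp]: "tswap 1 = 1" by (rule tser_eqI) (auto simp: tswap_def tcoeff_1)
lemma tswap_power: "tswap (f ^ n) = tswap f ^ n" by (induction n) (simp_all add: tswap_mult)
lemma bw_size_swap: "bw_size (snd p, fst p) = bw_size p" by (simp add: bw_size_def)
lemma order_ge_tswap: "order_ge n f \<Longrightarrow> order_ge n (tswap f)"
  unfolding order_ge_def tswap_def by (simp add: bw_size_swap)
lemma tswap_fps_subst: "tswap (fps_subst h a) = fps_subst (tswap h) a"
  by (rule tser_eqI) (simp add: tcoeff_tswap' tcoeff_fps_subst bw_size_swap flip: tswap_power)
lemma tswap_texp: "tswap (texp h) = texp (tswap h)" by (simp add: texp_def tswap_fps_subst)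
lemma right_only_tswap: "left_only f \<Longrightarrow> right_only (tswap f)" by (simp add: left_only_def right_only_def tswap_def)

definition tmonom :: "biword \<Rightarrow> 'k::comm_ring_1 tser" where
  "tmonom p = TSer (\<lambda>q. if q = p then 1 else 0)"

lemma tcoeff_tmonom: "tcoeff (tmonom p) q = (if q = p then 1 else 0)" by (simp add: tmonom_def)

definition xl :: "bool \<Rightarrow> 'k::comm_ring_1 tser" where "xl a = tmonom ([a],[])"
definition xr :: "bool \<Rightarrow> 'k::comm_ring_1 tser" where "xr a = tmonom ([],[a])"

definition homog :: "nat \<Rightarrow> 'k::comm_ring_1 tser \<Rightarrow> bool" where
  "homog n f \<longleftrightarrow> (\<forall>p. bw_size p \<noteq> n \<longrightarrow> tcoeff f p = 0)"

lemma homog_tcoeff: "homog n f \<Longrightarrow> bw_size p \<noteq> n \<Longrightarrow> tcoeff f p = 0" unfolding homog_def by blast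
lemma homog_diff: "homog n f \<Longrightarrow> homog n g \<Longrightarrow> homog n (f - g)" by (simp add: homog_def)
lemma homog_1: "homog 0 1" by (simp add: homog_def tcoeff_1 bw_size_def)
lemma homog_mult: "homog m f \<Longrightarrow> homog n g \<Longrightarrow> homog (m + n) (f * g)"
  unfolding homog_def tcoeff_mult
proof (intro allI impI sum.neutral ballI)
  fix p x assume f: "\<forall>p. bw_size p \<noteq> m \<longrightarrow> tcoeff f p = 0" and g: "\<forall>p. bw_size p \<noteq> n \<longrightarrow> tcoeff g p = 0"
    and p: "bw_size p \<noteq> m + n" and x: "x \<in> bw_splits p"
  then have "bw_size (fst x) + bw_size (snd x) = bw_size p" by (auto simp: bw_splits_def)
  then have "bw_size (fst x) \<noteq> m \<or> bw_size (snd x) \<noteq> n" using p by linarith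
  then show "tcoeff f (fst x) * tcoeff g (snd x) = 0" using f g by (metis mult_zero_left mult_zero_right)
qed
lemma homog_xl_xr: "homog 1 (xl a + xr a)" by (auto simp: homog_def xl_def xr_def tcoeff_tmonom bw_size_def)
lemma homog_order_ge: "homog n f \<Longrightarrow> order_ge n f" by (simp add: homog_def order_ge_def)

fun copr_word :: "bool list \<Rightarrow> 'k::comm_ring_1 tser" where
  "copr_word [] = 1"
| "copr_word (a # w) = (xl a + xr a) * copr_word w"

lemma copr_word_append: "copr_word (w1 @ w2) = copr_word w1 * copr_word w2"
  by (induction w1) (simp_all add: mult.assoc)

lemma homog_copr_word: "homog (length w) (copr_word w)"
  by (induction w) (auto simp: homog_1 dest: homog_mult[OF homog_xl_xr])

text \<open>copr is the continuous algebra map \<Delta> from series in the first factor into the tensor square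
  for which both letters are primitive: it reads f only at the biwords (w, []).\<close>

definition copr :: "'k::comm_ring_1 tser \<Rightarrow> 'k tser" where
  "copr f = TSer (\<lambda>p. \<Sum>w\<in>{w. length w = bw_size p}. tcoeff f (w,[]) * tcoeff (copr_word w) p)"

lemma tcoeff_copr:
  "tcoeff (copr f) p = (\<Sum>w\<in>{w. length w = bw_size p}. tcoeff f (w,[]) * tcoeff (copr_word w) p)"
  by (simp add: copr_def)

lemma copr_add: "copr (f + g) = copr f + copr g"
  by (rule tser_eqI) (simp add: tcoeff_copr distrib_right sum.distrib)
lemma copr_diff: "copr (f - g) = copr f - copr g"
  by (rule tser_eqI) (simp add: tcoeff_copr left_diff_distrib sum_subtractf)
lemma copr_0 [simp]: "copr 0 = 0"
  by (rule tser_eqI) (simp add: tcoeff_copr)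
lemma copr_tconst_mult: "copr (tconst c * f) = tconst c * copr f"
  by (rule tser_eqI) (simp add: tcoeff_copr sum_distrib_left mult.assoc)
lemma copr_sum: "copr (sum f A) = (\<Sum>i\<in>A. copr (f i))"
  by (induction A rule: infinite_finite_induct) (auto simp: copr_add)

lemma copr_1 [simp]: "copr 1 = 1"
proof (rule tser_eqI)
  fix p :: "biword"
  have "tcoeff (copr 1) p = (\<Sum>w\<in>{w. length w = bw_size p}. if w = [] then tcoeff (copr_word w) p else 0)"
    unfolding tcoeff_copr by (rule sum.cong) (auto simp: tcoeff_1)
  also have "\<dots> = (if bw_size p = 0 then tcoeff 1 p else 0)"
    by (subst sum.delta) auto
  also have "\<dots> = tcoeff 1 p" by (auto simp: tcoeff_1 bw_size_def)
  finally show "tcoeff (copr 1) p = tcoeff 1 p" .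
qed

lemma copr_xl: "copr (xl a) = xl a + xr a"
proof (rule tser_eqI)
  fix p :: "biword"
  have "tcoeff (copr (xl a)) p = (\<Sum>w\<in>{w. length w = bw_size p}. if w = [a] then tcoeff (copr_word w) p else 0)"
    unfolding tcoeff_copr by (rule sum.cong) (auto simp: xl_def tcoeff_tmonom)
  also have "\<dots> = (if bw_size p = 1 then tcoeff (copr_word [a]) p else 0)"
    by (subst sum.delta) auto
  also have "\<dots> = tcoeff (xl a + xr a) p"
    using homog_tcoeff[OF homog_xl_xr, of p a] by auto
  finally show "tcoeff (copr (xl a)) p = tcoeff (xl a + xr a) p" .
qed

lemma order_ge_copr: "order_ge n f \<Longrightarrow> order_ge n (copr f)"
  unfolding order_ge_def tcoeff_copr by (auto intro!: sum.neutral simp: bw_size_def)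

lemma eq_upto_copr: "eq_upto n f g \<Longrightarrow> eq_upto n (copr f) (copr g)"
  unfolding eq_upto_def by (simp add: order_ge_copr flip: copr_diff)

lemma sum_words_split:
  "(\<Sum>w\<in>{w::bool list. length w = n}. \<Sum>i\<le>length w. G (take i w) (drop i w)) =
   (\<Sum>q\<in>word_pairs n. G (fst q) (snd q))"
proof -
  have "(\<Sum>w\<in>{w::bool list. length w = n}. \<Sum>i\<le>length w. G (take i w) (drop i w)) =
        (\<Sum>z\<in>Sigma {w::bool list. length w = n} (\<lambda>w. {..length w}). G (take (snd z) (fst z)) (drop (snd z) (fst z)))"
    by (subst sum.Sigma) (auto simp: split_def)
  also have "\<dots> = (\<Sum>q\<in>word_pairs n. G (fst q) (snd q))"
    by (rule sum.reindex_bij_witness[where i="\<lambda>q. (fst q @ snd q, length (fst q))"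
                                        and j="\<lambda>z. (take (snd z) (fst z), drop (snd z) (fst z))"])
       (auto simp: word_pairs_def)
  finally show ?thesis .
qed

lemma copr_mult: "copr (f * g) = copr f * copr g"
proof (rule tser_eqI)
  fix p :: "biword"
  let ?H = "\<lambda>q x. tcoeff f (fst q, []) * tcoeff g (snd q, []) * (tcoeff (copr_word (fst q)) (fst x) * tcoeff (copr_word (snd q)) (snd x))"
  have "tcoeff (copr (f * g)) p =
     (\<Sum>w\<in>{w. length w = bw_size p}. \<Sum>i\<le>length w. tcoeff f (take i w, []) * tcoeff g (drop i w, []) *
          tcoeff (copr_word (take i w) * copr_word (drop i w)) p)"
    unfolding tcoeff_copr tcoeff_mult_left sum_distrib_right
    by (simp flip: copr_word_append)
  also have "\<dots> = (\<Sum>q\<in>word_pairs (bw_size p). tcoeff f (fst q, []) * tcoeff g (snd q, []) * tcoeff (copr_word (fst q) * copr_word (snd q)) p)"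
    by (rule sum_words_split)
  also have "\<dots> = (\<Sum>q\<in>word_pairs (bw_size p). \<Sum>x\<in>bw_splits p. ?H q x)"
    by (simp add: tcoeff_mult sum_distrib_left)
  also have "\<dots> = (\<Sum>x\<in>bw_splits p. \<Sum>q\<in>word_pairs (bw_size p). ?H q x)"
    by (rule sum.swap)
  also have "\<dots> = (\<Sum>x\<in>bw_splits p. \<Sum>q\<in>{w. length w = bw_size (fst x)} \<times> {w. length w = bw_size (snd x)}. ?H q x)"
  proof (rule sum.cong[OF refl])
    fix x assume x: "x \<in> bw_splits p"
    then have sx: "bw_size (fst x) + bw_size (snd x) = bw_size p" by (auto simp: bw_splits_def)
    show "(\<Sum>q\<in>word_pairs (bw_size p). ?H q x) = (\<Sum>q\<in>{w. length w = bw_size (fst x)} \<times> {w. length w = bw_size (snd x)}. ?H q x)"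
    proof (rule sum.mono_neutral_right)
      show "{w. length w = bw_size (fst x)} \<times> {w. length w = bw_size (snd x)} \<subseteq> word_pairs (bw_size p)"
        using sx by (auto simp: word_pairs_def)
      show "\<forall>q\<in>word_pairs (bw_size p) - {w. length w = bw_size (fst x)} \<times> {w. length w = bw_size (snd x)}. ?H q x = 0"
      proof
        fix q assume "q \<in> word_pairs (bw_size p) - {w. length w = bw_size (fst x)} \<times> {w. length w = bw_size (snd x)}"
        then have "bw_size (fst x) \<noteq> length (fst q) \<or> bw_size (snd x) \<noteq> length (snd q)" by (auto simp: mem_Times_iff)
        then show "?H q x = 0" using homog_tcoeff[OF homog_copr_word] by (metis mult_zero_left mult_zero_right)
      qed
    qed simp
  qed
  also have "\<dots> = tcoeff (copr f * copr g) p"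
    unfolding tcoeff_mult tcoeff_copr sum_product
    by (rule sum.cong[OF refl]) (simp add: sum.cartesian_product mult_ac split_def)
  finally show "tcoeff (copr (f * g)) p = tcoeff (copr f * copr g) p" .
qed

lemma copr_power: "copr (f ^ n) = copr f ^ n"
  by (induction n) (simp_all add: copr_mult)

lemma copr_fps_subst:
  assumes h: "order_ge 1 h"
  shows "copr (fps_subst h a) = fps_subst (copr h) a"
proof (rule eq_upto_all_eq)
  fix K
  have copr_h: "order_ge 1 (copr h)" by (rule order_ge_copr[OF h])
  have "eq_upto (Suc K) (copr (fps_subst h a)) (copr (fps_subst_trunc h a K))"
    by (rule eq_upto_copr[OF fps_subst_eq_upto_trunc[OF h]])
  moreover have "copr (fps_subst_trunc h a K) = fps_subst_trunc (copr h) a K"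
    by (simp add: fps_subst_trunc_def copr_sum copr_tconst_mult copr_power)
  moreover have "eq_upto (Suc K) (fps_subst (copr h) a) (fps_subst_trunc (copr h) a K)"
    by (rule fps_subst_eq_upto_trunc[OF copr_h])
  ultimately show "eq_upto (Suc K) (copr (fps_subst h a)) (fps_subst (copr h) a)"
    by (metis eq_upto_sym eq_upto_trans)
qed

lemma copr_texp: "order_ge 1 h \<Longrightarrow> copr (texp h) = texp (copr h)"
  by (simp add: texp_def copr_fps_subst)

section \<open>The Dynkin operator and the Dynkin-Specht-Wever lemma\<close>

lemma sum_eq_single:
  assumes "finite A" "xz \<in> A" "\<And>x. x \<in> A \<Longrightarrow> x \<noteq> xz \<Longrightarrow> G x = 0"
  shows "sum G A = G xz"
  using sum.mono_neutral_right[of A "{xz}" G] assms by auto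

lemma bw_splits_fst_inj: "x \<in> bw_splits p \<Longrightarrow> y \<in> bw_splits p \<Longrightarrow> fst x = fst y \<Longrightarrow> x = y"
  by (cases x; cases y) (auto simp: bw_splits_def bw_append_def)

lemma bw_splits_snd_inj: "x \<in> bw_splits p \<Longrightarrow> y \<in> bw_splits p \<Longrightarrow> snd x = snd y \<Longrightarrow> x = y"
  by (cases x; cases y) (auto simp: bw_splits_def bw_append_def)

lemma tcoeff_tmonom_mult:
  assumes "(q, r) \<in> bw_splits p"
  shows "tcoeff (tmonom q * T) p = tcoeff T r"
proof -
  define xz where "xz = (q, r)"
  have xz: "xz \<in> bw_splits p" "fst xz = q" using assms by (auto simp: xz_def)
  have "tcoeff (tmonom q * T) p = tcoeff (tmonom q) (fst xz) * tcoeff T (snd xz)"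
    unfolding tcoeff_mult
  proof (rule sum_eq_single[OF finite_bw_splits xz(1)])
    fix x assume "x \<in> bw_splits p" "x \<noteq> xz"
    then have "fst x \<noteq> q" using bw_splits_fst_inj xz by metis
    then show "tcoeff (tmonom q) (fst x) * tcoeff T (snd x) = 0" by (simp add: tcoeff_tmonom)
  qed
  then show ?thesis by (simp add: tcoeff_tmonom xz_def)
qed

lemma tcoeff_tmonom_mult_0:
  assumes "\<And>x. x \<in> bw_splits p \<Longrightarrow> fst x \<noteq> q"
  shows "tcoeff (tmonom q * T) p = 0"
  unfolding tcoeff_mult by (rule sum.neutral) (use assms in \<open>auto simp: tcoeff_tmonom\<close>)

lemma tcoeff_mult_tmonom:
  assumes "(r, q) \<in> bw_splits p"
  shows "tcoeff (T * tmonom q) p = tcoeff T r"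
proof -
  define xz where "xz = (r, q)"
  have xz: "xz \<in> bw_splits p" "snd xz = q" using assms by (auto simp: xz_def)
  have "tcoeff (T * tmonom q) p = tcoeff T (fst xz) * tcoeff (tmonom q) (snd xz)"
    unfolding tcoeff_mult
  proof (rule sum_eq_single[OF finite_bw_splits xz(1)])
    fix x assume "x \<in> bw_splits p" "x \<noteq> xz"
    then have "snd x \<noteq> q" using bw_splits_snd_inj xz by metis
    then show "tcoeff T (fst x) * tcoeff (tmonom q) (snd x) = 0" by (simp add: tcoeff_tmonom)
  qed
  then show ?thesis by (simp add: tcoeff_tmonom xz_def)
qed

lemma tcoeff_mult_tmonom_0:
  assumes "\<And>x. x \<in> bw_splits p \<Longrightarrow> snd x \<noteq> q"
  shows "tcoeff (T * tmonom q) p = 0"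
  unfolding tcoeff_mult by (rule sum.neutral) (use assms in \<open>auto simp: tcoeff_tmonom\<close>)

lemma tcoeff_xl_mult:
  "tcoeff (xl a * T) (u,v) = (case u of [] \<Rightarrow> 0 | b # u' \<Rightarrow> if b = a then tcoeff T (u',v) else 0)"
proof (cases "u \<noteq> [] \<and> hd u = a")
  case True
  then obtain u' where u: "u = a # u'" by (cases u) auto
  have "tcoeff (xl a * T) (u,v) = tcoeff T (u',v)" unfolding xl_def
    by (rule tcoeff_tmonom_mult) (simp_all add: u bw_splits_def bw_append_def)
  then show ?thesis by (simp add: u)
next
  case False
  have "tcoeff (xl a * T) (u,v) = 0" unfolding xl_def
  proof (rule tcoeff_tmonom_mult_0)
    fix x assume x: "x \<in> bw_splits (u,v)"
    show "fst x \<noteq> ([a],[])"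
    proof
      assume "fst x = ([a],[])"
      then have "u = a # fst (snd x)" using x by (auto simp: bw_splits_def bw_append_def)
      then show False using False by simp
    qed
  qed
  then show ?thesis using False by (cases u) auto
qed

lemma tcoeff_xr_mult:
  "tcoeff (xr a * T) (u,v) = (case v of [] \<Rightarrow> 0 | b # v' \<Rightarrow> if b = a then tcoeff T (u,v') else 0)"
proof (cases "v \<noteq> [] \<and> hd v = a")
  case True
  then obtain v' where v: "v = a # v'" by (cases v) auto
  have "tcoeff (xr a * T) (u,v) = tcoeff T (u,v')" unfolding xr_def
    by (rule tcoeff_tmonom_mult) (simp_all add: v bw_splits_def bw_append_def)
  then show ?thesis by (simp add: v)
next
  case False
  have "tcoeff (xr a * T) (u,v) = 0" unfolding xr_def
  proof (rule tcoeff_tmonom_mult_0)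
    fix x assume x: "x \<in> bw_splits (u,v)"
    show "fst x \<noteq> ([],[a])"
    proof
      assume "fst x = ([],[a])"
      then have "v = a # snd (snd x)" using x by (auto simp: bw_splits_def bw_append_def)
      then show False using False by simp
    qed
  qed
  then show ?thesis using False by (cases v) auto
qed

lemma tcoeff_mult_xl:
  "tcoeff (T * xl a) (w,[]) = (if w \<noteq> [] \<and> last w = a then tcoeff T (butlast w, []) else 0)"
proof (cases "w \<noteq> [] \<and> last w = a")
  case True
  then have w: "w = butlast w @ [a]" using append_butlast_last_id[of w] by simp
  have "tcoeff (T * xl a) (w,[]) = tcoeff T (butlast w,[])" unfolding xl_def
    by (rule tcoeff_mult_tmonom) (simp add: bw_splits_def bw_append_def flip: w)
  then show ?thesis using True by simp
next
  case False
  have "tcoeff (T * xl a) (w,[]) = 0" unfolding xl_def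
  proof (rule tcoeff_mult_tmonom_0)
    fix x assume x: "x \<in> bw_splits (w,[])"
    show "snd x \<noteq> ([a],[])"
    proof
      assume "snd x = ([a],[])"
      then have "w = fst (fst x) @ [a]" using x by (auto simp: bw_splits_def bw_append_def)
      then show False using False by simp
    qed
  qed
  then show ?thesis by (simp only: if_not_P[OF False])
qed

lemma left_only_tcoeff: "left_only f \<Longrightarrow> v \<noteq> [] \<Longrightarrow> tcoeff f (u,v) = 0"
  by (simp add: left_only_def)

lemma left_only_xl: "left_only (xl a)"
  by (simp add: left_only_def xl_def tcoeff_tmonom)

text \<open>antipode_mult c maps u \<otimes> v to c |u| \<cdot> u S(v), with the antipode S(v) = (-1)^|v| rev v.
  For constant weight it is the convolution id \<star> S, which kills copr of every nonempty word; for
  the weight c i = i it is D \<star> S with the degree operator D, which maps copr of a word to its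
  right-nested commutator.\<close>

definition antipode_mult :: "(nat \<Rightarrow> 'k::comm_ring_1) \<Rightarrow> 'k tser \<Rightarrow> 'k tser" where
  "antipode_mult c T = TSer (\<lambda>(w,v). if v = [] then
     (\<Sum>i\<le>length w. c i * tcoeff T (take i w, rev (drop i w)) * (-1) ^ (length w - i)) else 0)"

lemma tcoeff_antipode_mult: "tcoeff (antipode_mult c T) (w,v) = (if v = [] then
     (\<Sum>i\<le>length w. c i * tcoeff T (take i w, rev (drop i w)) * (-1) ^ (length w - i)) else 0)"
  by (simp add: antipode_mult_def)

lemma left_only_antipode_mult: "left_only (antipode_mult c T)"
  by (simp add: left_only_def tcoeff_antipode_mult)

lemma antipode_mult_add: "antipode_mult c (S + T) = antipode_mult c S + antipode_mult c T"
  by (rule tser_eqI) (auto simp: antipode_mult_def distrib_left distrib_right sum.distrib)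

lemma antipode_mult_weight_add:
  "antipode_mult (\<lambda>i. c i + d i) T = antipode_mult c T + antipode_mult d T"
  by (rule tser_eqI) (auto simp: antipode_mult_def distrib_right sum.distrib)

lemma antipode_mult_xl: "antipode_mult c (xl a * T) = xl a * antipode_mult (\<lambda>i. c (Suc i)) T"
proof (rule tser_eqI)
  fix p :: biword
  obtain w v where p: "p = (w,v)" by (cases p)
  have lo: "left_only (xl a * antipode_mult (\<lambda>i. c (Suc i)) T)"
    by (intro left_only_mult left_only_xl left_only_antipode_mult)
  consider "v \<noteq> []" | "v = []" "w = []" | b w' where "v = []" "w = b # w'"
    by (cases w) auto
  then show "tcoeff (antipode_mult c (xl a * T)) p = tcoeff (xl a * antipode_mult (\<lambda>i. c (Suc i)) T) p"
  proof cases
    case 1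
    then show ?thesis by (simp add: p tcoeff_antipode_mult left_only_tcoeff[OF lo])
  next
    case 2
    then show ?thesis by (simp add: p tcoeff_antipode_mult tcoeff_xl_mult)
  next
    case (3 b w')
    have "tcoeff (antipode_mult c (xl a * T)) p = (\<Sum>i\<le>length w'.
        c (Suc i) * tcoeff (xl a * T) (take (Suc i) w, rev (drop (Suc i) w)) * (-1) ^ (length w' - i))"
      by (simp add: p 3 tcoeff_antipode_mult sum.atMost_Suc_shift del: sum.atMost_Suc)
        (simp add: tcoeff_xl_mult)
    also have "\<dots> = tcoeff (xl a * antipode_mult (\<lambda>i. c (Suc i)) T) p"
      by (simp add: p 3 tcoeff_xl_mult tcoeff_antipode_mult)
    finally show ?thesis .
  qed
qed

lemma antipode_mult_xr: "antipode_mult c (xr a * T) = - (antipode_mult c T * xl a)"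
proof (rule tser_eqI)
  fix p :: biword
  obtain w v where p: "p = (w,v)" by (cases p)
  show "tcoeff (antipode_mult c (xr a * T)) p = tcoeff (- (antipode_mult c T * xl a)) p"
  proof (cases "v = [] \<and> w \<noteq> []")
    case False
    have "left_only (antipode_mult c T * xl a)"
      by (intro left_only_mult left_only_xl left_only_antipode_mult)
    then show ?thesis
      using False by (cases "v = []") (simp_all add: p tcoeff_antipode_mult tcoeff_xr_mult
          tcoeff_mult_xl left_only_tcoeff)
  next
    case True
    then obtain b w' where v: "v = []" and w: "w = w' @ [b]" by (cases w rule: rev_exhaust) auto
    have "tcoeff (antipode_mult c (xr a * T)) p = (\<Sum>i\<le>Suc (length w').
        c i * tcoeff (xr a * T) (take i w, rev (drop i w)) * (-1) ^ (Suc (length w') - i))"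
      by (simp add: p v w tcoeff_antipode_mult)
    also have "\<dots> = (\<Sum>i\<le>length w'.
        c i * tcoeff (xr a * T) (take i w, rev (drop i w)) * (-1) ^ (Suc (length w') - i))"
      by (subst sum.atMost_Suc) (simp add: w tcoeff_xr_mult)
    also have "\<dots> = (\<Sum>i\<le>length w'. (if b = a then
        - (c i * tcoeff T (take i w', rev (drop i w')) * (-1) ^ (length w' - i)) else 0))"
      by (rule sum.cong) (auto simp: w tcoeff_xr_mult Suc_diff_le)
    also have "\<dots> = tcoeff (- (antipode_mult c T * xl a)) p"
      by (simp add: p v w tcoeff_mult_xl tcoeff_antipode_mult sum_negf)
    finally show ?thesis .
  qed
qed

lemma antipode_mult_1: "antipode_mult c 1 = tconst (c 0)"
proof (rule tser_eqI)
  fix p :: biword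
  obtain w v where p: "p = (w,v)" by (cases p)
  show "tcoeff (antipode_mult c 1) p = tcoeff (tconst (c 0)) p"
    by (cases w) (auto simp: p tcoeff_antipode_mult tcoeff_1 tcoeff_tconst intro!: sum.neutral)
qed

lemma antipode_mult_copr_word: "antipode_mult (\<lambda>_. c) (copr_word w) = (if w = [] then tconst c else 0)"
proof (induction w)
  case (Cons a w)
  then show ?case
    by (simp add: distrib_right antipode_mult_add antipode_mult_xl antipode_mult_xr tconst_commute)
qed (simp add: antipode_mult_1)

definition commutator :: "'a::ring \<Rightarrow> 'a \<Rightarrow> 'a" where
  "commutator x y = x * y - y * x"

definition lie_word :: "bool list \<Rightarrow> 'k::comm_ring_1 tser" where
  "lie_word w = rnest commutator (map xl w)"

lemma lie_word_simps [simp]: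
  "lie_word [] = 0" "lie_word [a] = xl a"
  "lie_word (a # b # w) = xl a * lie_word (b # w) - lie_word (b # w) * xl a"
  by (simp_all add: lie_word_def commutator_def)

lemma homog_xl: "homog 1 (xl a)" by (auto simp: homog_def xl_def tcoeff_tmonom bw_size_def)

lemma homog_lie_word: "w \<noteq> [] \<Longrightarrow> homog (length w) (lie_word w :: 'k::comm_ring_1 tser)"
proof (induction w rule: induct_list012)
  case (2 a) then show ?case using homog_xl[of a] by simp
next
  case (3 a b w)
  have h: "homog (length (b # w)) (lie_word (b # w) :: 'k tser)" using 3 by simp
  have h2: "homog (1 + length (b # w)) (lie_word (b # w) * xl a :: 'k tser)"
    using homog_mult[OF h homog_xl] by (simp add: add.commute)
  show ?case using homog_diff[OF homog_mult[OF homog_xl h] h2] by simp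
qed simp

lemma order_ge_lie_word: "w \<noteq> [] \<Longrightarrow> order_ge 1 (lie_word w :: 'k::comm_ring_1 tser)"
  using homog_order_ge[OF homog_lie_word] order_ge_mono by (metis Suc_leI length_greater_0_conv One_nat_def)

lemma antipode_mult_deg_copr_word:
  "antipode_mult of_nat (copr_word w :: 'k::comm_ring_1 tser) = lie_word w"
proof (induction w)
  case (Cons a w)
  have "antipode_mult of_nat (copr_word (a # w) :: 'k tser) =
      xl a * antipode_mult (\<lambda>i. 1 + of_nat i) (copr_word w) + - (antipode_mult of_nat (copr_word w) * xl a)"
    by (simp only: copr_word.simps distrib_right antipode_mult_add antipode_mult_xl antipode_mult_xr
        of_nat_Suc)
  also have "\<dots> = xl a * ((if w = [] then 1 else 0) + lie_word w) - lie_word w * xl a"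
    by (simp only: antipode_mult_weight_add antipode_mult_copr_word Cons.IH tconst_1) simp
  finally show ?case by (cases w) simp_all
qed (simp add: antipode_mult_1)

definition dynkin_op :: "'k::comm_ring_1 tser \<Rightarrow> 'k tser" where
  "dynkin_op f = TSer (\<lambda>(w,v). if v = [] then
     (\<Sum>w'\<in>{w'. length w' = length w}. tcoeff f (w',[]) * tcoeff (lie_word w') (w,[])) else 0)"

lemma tcoeff_dynkin_op: "tcoeff (dynkin_op f) (w,v) = (if v = [] then
     (\<Sum>w'\<in>{w'. length w' = length w}. tcoeff f (w',[]) * tcoeff (lie_word w') (w,[])) else 0)"
  by (simp add: dynkin_op_def)

lemma antipode_mult_deg_copr: "antipode_mult of_nat (copr f) = dynkin_op f"
proof (rule tser_eqI)
  fix p :: biword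
  obtain w v where p: "p = (w,v)" by (cases p)
  let ?W = "{w'. length w' = length w}"
  show "tcoeff (antipode_mult of_nat (copr f)) p = tcoeff (dynkin_op f) p"
  proof (cases "v = []")
    case True
    have "tcoeff (antipode_mult of_nat (copr f)) p = (\<Sum>i\<le>length w. of_nat i * (\<Sum>w'\<in>?W.
        tcoeff f (w',[]) * tcoeff (copr_word w') (take i w, rev (drop i w))) * (-1) ^ (length w - i))"
      by (auto simp: p True tcoeff_antipode_mult tcoeff_copr bw_size_def intro!: sum.cong)
    also have "\<dots> = (\<Sum>w'\<in>?W. tcoeff f (w',[]) * (\<Sum>i\<le>length w.
        of_nat i * tcoeff (copr_word w') (take i w, rev (drop i w)) * (-1) ^ (length w - i)))"
      by (simp add: sum_distrib_left sum_distrib_right mult_ac) (rule sum.swap)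
    also have "\<dots> = tcoeff (dynkin_op f) p"
      by (simp add: p True tcoeff_dynkin_op flip: antipode_mult_deg_copr_word)
        (simp add: tcoeff_antipode_mult)
    finally show ?thesis .
  qed (simp add: p tcoeff_antipode_mult tcoeff_dynkin_op)
qed

lemma dynkin_op_primitive:
  assumes Z: "left_only Z" and prim: "copr Z = Z + tswap Z"
  shows "tcoeff (dynkin_op Z) (w,[]) = of_nat (length w) * tcoeff Z (w,[])"
proof -
  have "tcoeff (antipode_mult of_nat Z) (w,[]) = of_nat (length w) * tcoeff Z (w,[])"
    unfolding tcoeff_antipode_mult if_P[OF refl]
    by (subst sum_eq_single[where xz="length w"]) (auto simp: left_only_tcoeff[OF Z])
  moreover have "tcoeff (antipode_mult of_nat (tswap Z)) (w,[]) = 0"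
    unfolding tcoeff_antipode_mult if_P[OF refl]
  proof (rule sum.neutral, rule ballI)
    fix i assume i: "i \<in> {..length w}"
    show "of_nat i * tcoeff (tswap Z) (take i w, rev (drop i w)) * (-1) ^ (length w - i) = 0"
    proof (cases "i = 0")
      case False
      then have "take i w \<noteq> []" using i by auto
      then show ?thesis using left_only_tcoeff[OF Z] by (simp add: tcoeff_tswap)
    qed simp
  qed
  ultimately show ?thesis
    by (simp flip: antipode_mult_deg_copr add: prim antipode_mult_add)
qed

section \<open>The Baker-Campbell-Hausdorff series\<close>

lemma order_ge_power_diff:
  fixes a b :: "'k::comm_ring_1 tser"
  assumes a: "order_ge 1 a" and b: "order_ge 1 b" and ab: "order_ge m (a - b)"
  shows "order_ge (m + i) (a ^ Suc i - b ^ Suc i)"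
proof (induction i)
  case (Suc i)
  have "a ^ Suc (Suc i) - b ^ Suc (Suc i) = a * (a ^ Suc i - b ^ Suc i) + (a - b) * b ^ Suc i"
    by (simp add: algebra_simps)
  moreover have "order_ge (m + Suc i) (a * (a ^ Suc i - b ^ Suc i))"
    using order_ge_mult[OF a Suc] by simp
  moreover have "order_ge (m + Suc i) ((a - b) * b ^ Suc i)"
    using order_ge_mult[OF ab order_ge_power[OF b, of "Suc i"]] by simp
  ultimately show ?case by (simp add: order_ge_add)
qed (use ab in simp)

text \<open>If a and b agree below degree K + 1, then so do a^i and b^i below degree K + i for i \<ge> 1;
  comparing the truncated exponential series shows that texp a = texp b forces a and b to agree
  in degree K + 1 as well.\<close>

lemma texp_eq_upto_Suc:
  fixes a b :: "'k::field_char_0 tser"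
  assumes a: "order_ge 1 a" and b: "order_ge 1 b" and e: "texp a = texp b"
    and ab: "eq_upto (Suc K) a b"
  shows "eq_upto (Suc (Suc K)) a b"
proof -
  define t where "t i = tconst (1 / fact i) * (a ^ i - b ^ i) - (if i = 1 then a - b else 0)" for i
  define Ta where "Ta = (\<Sum>i\<le>Suc K. tconst (1 / fact i) * a ^ i)"
  define Tb where "Tb = (\<Sum>i\<le>Suc K. tconst (1 / fact i) * b ^ i)"
  have TaTb: "order_ge (Suc (Suc K)) (Ta - Tb)"
    using eq_upto_trans[OF eq_upto_sym[OF texp_eq_upto_trunc[OF a, of "Suc K", unfolded e]]
        texp_eq_upto_trunc[OF b, of "Suc K"]]
    unfolding Ta_def Tb_def eq_upto_def .
  have "order_ge (Suc (Suc K)) (t i)" for i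
  proof (cases "i \<ge> 2")
    case True
    then obtain j where j: "i = Suc (Suc j)" by (metis add_2_eq_Suc le_Suc_ex)
    have "order_ge (Suc K + Suc j) (a ^ i - b ^ i)"
      unfolding j using ab by (intro order_ge_power_diff a b) (simp add: eq_upto_def)
    then have "order_ge (Suc (Suc K)) (a ^ i - b ^ i)" by (rule order_ge_mono[rotated]) simp
    then show ?thesis using True by (simp add: t_def order_ge_tconst_mult)
  next
    case False
    then have "i = 0 \<or> i = 1" by auto
    then show ?thesis by (auto simp: t_def)
  qed
  then have "order_ge (Suc (Suc K)) (\<Sum>i\<le>Suc K. t i)" by (rule order_ge_sum)
  moreover have "a - b = (Ta - Tb) - (\<Sum>i\<le>Suc K. t i)"
    by (simp add: t_def Ta_def Tb_def sum_subtractf right_diff_distrib)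
  ultimately show ?thesis
    unfolding eq_upto_def by (metis TaTb order_ge_diff)
qed

lemma texp_inj:
  fixes a b :: "'k::field_char_0 tser"
  assumes a: "order_ge 1 a" and b: "order_ge 1 b" and e: "texp a = texp b"
  shows "a = b"
proof (rule eq_upto_all_eq)
  show "eq_upto (Suc K) a b" for K
  proof (induction K)
    case 0
    then show ?case using a b by (simp add: eq_upto_def order_ge_diff)
  qed (rule texp_eq_upto_Suc[OF a b e])
qed

lemma order_ge_xl: "order_ge 1 (xl a)"
  by (simp add: order_ge_def xl_def tcoeff_tmonom bw_size_def)
lemma order_ge_xr: "order_ge 1 (xr a)"
  by (simp add: order_ge_def xr_def tcoeff_tmonom bw_size_def)
lemma right_only_xr: "right_only (xr a)"
  by (simp add: right_only_def xr_def tcoeff_tmonom)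
lemma tswap_xl: "tswap (xl a) = xr a"
  by (rule tser_eqI) (auto simp: tcoeff_tswap' xl_def xr_def tcoeff_tmonom prod_eq_iff)

lemma order_ge_texp_minus_1: "order_ge 1 f \<Longrightarrow> order_ge 1 (texp f - 1)"
  unfolding texp_def by (auto simp: order_ge_def tcoeff_fps_subst bw_size_def tcoeff_1)

definition exp_x_exp_y :: "'k::field_char_0 tser" where
  "exp_x_exp_y = texp (xl False) * texp (xl True)"

definition bch_series :: "'k::field_char_0 tser" where
  "bch_series = tln1p (exp_x_exp_y - 1)"

lemma order_ge_exp_x_exp_y_minus_1: "order_ge 1 (exp_x_exp_y - 1)"
proof -
  have "exp_x_exp_y - 1 = (texp (xl False) - 1) * (texp (xl True) - 1) + (texp (xl False) - 1) +
      (texp (xl True) - 1)"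
    by (simp add: exp_x_exp_y_def algebra_simps)
  moreover have "order_ge 1 (texp (xl a) - 1)" for a
    by (rule order_ge_texp_minus_1[OF order_ge_xl])
  ultimately show ?thesis by (metis order_ge_add order_ge_mult_left)
qed

lemma texp_bch_series: "texp bch_series = exp_x_exp_y"
  unfolding bch_series_def using texp_tln1p[OF order_ge_exp_x_exp_y_minus_1] by simp

lemma order_ge_bch_series: "order_ge 1 bch_series"
  unfolding bch_series_def by (rule order_ge_tln1p[OF order_ge_exp_x_exp_y_minus_1])

lemma left_only_bch_series: "left_only bch_series"
  unfolding bch_series_def exp_x_exp_y_def
  by (intro left_only_tln1p left_only_diff left_only_mult left_only_texp left_only_xl left_only_1)

lemma copr_texp_xl: "copr (texp (xl a)) = texp (xl a) * tswap (texp (xl a))"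
proof -
  have "copr (texp (xl a)) = texp (xl a + xr a)"
    by (simp add: copr_texp[OF order_ge_xl] copr_xl)
  also have "\<dots> = texp (xl a) * texp (xr a)"
    by (rule texp_add[OF order_ge_xl order_ge_xr left_right_commute[OF left_only_xl right_only_xr]])
  finally show ?thesis by (simp add: tswap_texp tswap_xl)
qed

lemma copr_exp_x_exp_y: "copr exp_x_exp_y = exp_x_exp_y * tswap exp_x_exp_y"
proof -
  let ?x = "texp (xl False) :: 'a tser" and ?y = "texp (xl True) :: 'a tser"
  have comm: "tswap ?x * ?y = ?y * tswap ?x"
    by (rule left_right_commute[symmetric]) (intro left_only_texp left_only_xl right_only_tswap)+
  have "copr exp_x_exp_y = ?x * (tswap ?x * ?y) * tswap ?y"
    by (simp add: exp_x_exp_y_def copr_mult copr_texp_xl mult.assoc)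
  also have "\<dots> = ?x * ?y * (tswap ?x * tswap ?y)"
    by (simp add: comm mult.assoc)
  finally show ?thesis by (simp add: exp_x_exp_y_def tswap_mult)
qed

text \<open>Since e^x e^y is grouplike, its logarithm is primitive.\<close>

lemma copr_bch_series: "copr bch_series = bch_series + tswap bch_series"
proof (rule texp_inj)
  show "order_ge 1 (copr bch_series)" by (rule order_ge_copr[OF order_ge_bch_series])
  show "order_ge 1 (bch_series + tswap bch_series)"
    by (intro order_ge_add order_ge_bch_series order_ge_tswap)
  have "texp (bch_series + tswap bch_series) = texp bch_series * texp (tswap bch_series)"
    by (intro texp_add order_ge_bch_series order_ge_tswap left_right_commute left_only_bch_series
        right_only_tswap)
  also have "\<dots> = texp (copr bch_series)"
    by (simp add: copr_texp[OF order_ge_bch_series, symmetric] texp_bch_series copr_exp_x_exp_y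
        flip: tswap_texp)
  finally show "texp (copr bch_series) = texp (bch_series + tswap bch_series)" by (rule sym)
qed

lemma dynkin_op_bch_series:
  "tcoeff (dynkin_op bch_series) (w,[]) = of_nat (length w) * tcoeff bch_series (w,[])"
  by (rule dynkin_op_primitive[OF left_only_bch_series copr_bch_series])

lemma power_sum_lists:
  fixes m :: "'b \<Rightarrow> 'a::ring_1"
  assumes S: "finite S"
  shows "(\<Sum>q\<in>S. m q) ^ n = (\<Sum>ws\<in>{ws. set ws \<subseteq> S \<and> length ws = n}. prod_list (map m ws))"
proof (induction n)
  case 0
  have "{ws. set ws \<subseteq> S \<and> length ws = 0} = {[]}" by auto
  then show ?case by simp
next
  case (Suc n)
  have fin: "finite {ws. set ws \<subseteq> S \<and> length ws = n}"
    using finite_lists_length_le[OF S, of n] by (rule finite_subset[rotated]) auto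
  have "(\<Sum>q\<in>S. m q) ^ Suc n = (\<Sum>q\<in>S. m q) * (\<Sum>ws\<in>{ws. set ws \<subseteq> S \<and> length ws = n}. prod_list (map m ws))"
    by (simp add: Suc)
  also have "\<dots> = (\<Sum>z\<in>S \<times> {ws. set ws \<subseteq> S \<and> length ws = n}. m (fst z) * prod_list (map m (snd z)))"
    by (simp add: sum_product sum.cartesian_product split_def)
  also have "\<dots> = (\<Sum>ws\<in>{ws. set ws \<subseteq> S \<and> length ws = Suc n}. prod_list (map m ws))"
    by (rule sum.reindex_bij_witness[where i="\<lambda>ws. (hd ws, tl ws)" and j="\<lambda>z. fst z # snd z"])
       (auto simp: length_Suc_conv)
  finally show ?case .
qed

lemma tmonom_mult: "tmonom p * tmonom q = (tmonom (bw_append p q) :: 'k::comm_ring_1 tser)"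
proof (rule tser_eqI)
  fix r
  show "tcoeff (tmonom p * tmonom q) r = tcoeff (tmonom (bw_append p q)) r"
  proof (cases "r = bw_append p q")
    case True
    then show ?thesis by (simp add: tcoeff_tmonom_mult[where r=q] bw_splits_def tcoeff_tmonom)
  next
    case False
    have "tcoeff (tmonom p * tmonom q) r = 0"
      unfolding tcoeff_mult
    proof (rule sum.neutral, rule ballI)
      fix x assume "x \<in> bw_splits r"
      then have "bw_append (fst x) (snd x) = r" by (auto simp: bw_splits_def)
      then show "tcoeff (tmonom p) (fst x) * tcoeff (tmonom q) (snd x) = 0" using False by (auto simp: tcoeff_tmonom)
    qed
    then show ?thesis using False by (simp add: tcoeff_tmonom)
  qed
qed

lemma tmonom_Nil: "tmonom ([],[]) = (1 :: 'k::comm_ring_1 tser)"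
  by (rule tser_eqI) (simp add: tcoeff_tmonom tcoeff_1)

lemma xl_power: "xl a ^ r = (tmonom (replicate r a, []) :: 'k::comm_ring_1 tser)"
  by (induction r) (simp_all add: tmonom_Nil xl_def tmonom_mult bw_append_def)

definition dynkin_word :: "(nat \<times> nat) list \<Rightarrow> bool list" where
  "dynkin_word ws = dynkin_letters False True ws"

definition exp_term :: "nat \<times> nat \<Rightarrow> 'k::field_char_0 tser" where
  "exp_term q = tconst (1 / (fact (fst q) * fact (snd q))) * tmonom (replicate (fst q) False @ replicate (snd q) True, [])"

lemma dynkin_word_Nil [simp]: "dynkin_word [] = []"
  by (simp add: dynkin_word_def dynkin_letters_def)

lemma dynkin_word_Cons: "dynkin_word (q # ws) = replicate (fst q) False @ replicate (snd q) True @ dynkin_word ws"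
  by (simp add: dynkin_word_def dynkin_letters_def)

lemma prod_list_exp_term: "prod_list (map (exp_term :: _ \<Rightarrow> 'k::field_char_0 tser) ws) =
    tconst (\<Prod>q\<leftarrow>ws. 1 / (fact (fst q) * fact (snd q))) * tmonom (dynkin_word ws, [])"
proof (induction ws)
  case Nil then show ?case by (simp add: tmonom_Nil)
next
  case (Cons q ws)
  have "prod_list (map exp_term (q # ws)) = (exp_term q * prod_list (map exp_term ws) :: 'k tser)" by simp
  also have "\<dots> = exp_term q * (tconst (\<Prod>q\<leftarrow>ws. 1 / (fact (fst q) * fact (snd q))) * tmonom (dynkin_word ws, []))"
    by (simp only: Cons)
  also have "\<dots> = tconst (1 / (fact (fst q) * fact (snd q)) * (\<Prod>q\<leftarrow>ws. 1 / (fact (fst q) * fact (snd q)))) *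
      tmonom (dynkin_word (q # ws), [])"
    by (simp only: exp_term_def tconst_mult_mult tmonom_mult) (simp add: bw_append_def dynkin_word_Cons)
  finally show ?case by simp
qed

lemma length_dynkin_word: "length (dynkin_word ws) = (\<Sum>q\<leftarrow>ws. fst q + snd q)"
  by (induction ws) (simp_all add: dynkin_word_Cons)

lemma exp_x_exp_y_eq_upto: "eq_upto (Suc K) exp_x_exp_y (\<Sum>q\<in>{..K} \<times> {..K}. exp_term q)"
proof -
  have "eq_upto (Suc K) exp_x_exp_y
      ((\<Sum>r\<le>K. tconst (1 / fact r) * xl False ^ r) * (\<Sum>s\<le>K. tconst (1 / fact s) * xl True ^ s))"
    unfolding exp_x_exp_y_def by (intro eq_upto_mult texp_eq_upto_trunc order_ge_xl)
  also have "(\<Sum>r\<le>K. tconst (1 / fact r) * xl False ^ r) * (\<Sum>s\<le>K. tconst (1 / fact s) * xl True ^ s) =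
      (\<Sum>q\<in>{..K} \<times> {..K}. exp_term q)"
    by (simp add: sum_product sum.cartesian_product split_def exp_term_def tconst_mult_mult
        xl_power tmonom_mult bw_append_def)
  finally show ?thesis .
qed

definition exp_pairs :: "nat \<Rightarrow> (nat \<times> nat) set" where
  "exp_pairs K = {..K} \<times> {..K} - {(0,0)}"

lemma finite_exp_pairs [simp]: "finite (exp_pairs K)"
  by (simp add: exp_pairs_def)

lemma exp_x_exp_y_minus_1_eq_upto:
  "eq_upto (Suc K) (exp_x_exp_y - 1) (\<Sum>q\<in>exp_pairs K. (exp_term q :: 'k::field_char_0 tser))"
proof -
  have "(\<Sum>q\<in>{..K} \<times> {..K}. exp_term q) = exp_term (0,0) + (\<Sum>q\<in>exp_pairs K. (exp_term q :: 'k tser))"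
    unfolding exp_pairs_def by (rule sum.remove) auto
  moreover have "exp_term (0,0) = (1 :: 'k tser)"
    by (simp add: exp_term_def tmonom_Nil)
  ultimately have eq: "(\<Sum>q\<in>{..K} \<times> {..K}. exp_term q) - 1 = (\<Sum>q\<in>exp_pairs K. (exp_term q :: 'k tser))"
    by simp
  have "eq_upto (Suc K) (exp_x_exp_y - 1) ((\<Sum>q\<in>{..K} \<times> {..K}. exp_term q) - 1)"
    by (rule eq_upto_diff[OF exp_x_exp_y_eq_upto eq_upto_refl])
  then show ?thesis by (rule subst[OF eq, where P="\<lambda>x. eq_upto (Suc K) (exp_x_exp_y - 1) x"])
qed

definition exp_lists :: "nat \<Rightarrow> nat \<Rightarrow> (nat \<times> nat) list set" where
  "exp_lists K n = {ws. set ws \<subseteq> exp_pairs K \<and> length ws = n}"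

definition exp_lists_le :: "nat \<Rightarrow> (nat \<times> nat) list set" where
  "exp_lists_le K = {ws. set ws \<subseteq> exp_pairs K \<and> length ws \<le> K}"

lemma finite_exp_lists [simp]: "finite (exp_lists K n)"
  unfolding exp_lists_def
  by (rule finite_subset[OF _ finite_lists_length_le[OF finite_exp_pairs, of K n]]) auto

lemma finite_exp_lists_le [simp]: "finite (exp_lists_le K)"
  unfolding exp_lists_le_def by (rule finite_lists_length_le[OF finite_exp_pairs])

definition inv_fact_prod :: "(nat \<times> nat) list \<Rightarrow> 'k::field_char_0" where
  "inv_fact_prod ws = (\<Prod>q\<leftarrow>ws. 1 / (fact (fst q) * fact (snd q)))"

lemma bch_series_eq_upto: "eq_upto (Suc K) bch_series (\<Sum>n\<le>K. \<Sum>ws\<in>exp_lists K n.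
    tconst (fps_ln 1 $ n * inv_fact_prod ws) * (tmonom (dynkin_word ws, []) :: 'k::field_char_0 tser))"
proof -
  have "eq_upto (Suc K) bch_series (fps_subst_trunc (exp_x_exp_y - 1) (fps_ln 1) K)"
    unfolding bch_series_def tln1p_def
    by (rule fps_subst_eq_upto_trunc[OF order_ge_exp_x_exp_y_minus_1])
  also have "eq_upto (Suc K) (fps_subst_trunc (exp_x_exp_y - 1) (fps_ln 1) K)
      (\<Sum>n\<le>K. tconst (fps_ln 1 $ n) * (\<Sum>q\<in>exp_pairs K. exp_term q) ^ n)"
    unfolding fps_subst_trunc_def
    by (intro eq_upto_sum eq_upto_tconst_mult eq_upto_power exp_x_exp_y_minus_1_eq_upto)
  also have "(\<Sum>n\<le>K. tconst (fps_ln 1 $ n) * (\<Sum>q\<in>exp_pairs K. exp_term q) ^ n) =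
      (\<Sum>n\<le>K. \<Sum>ws\<in>exp_lists K n. tconst (fps_ln 1 $ n * inv_fact_prod ws) * (tmonom (dynkin_word ws, []) :: 'k tser))"
    by (simp add: power_sum_lists exp_lists_def prod_list_exp_term sum_distrib_left inv_fact_prod_def
        tconst_mult mult.assoc)
  finally show ?thesis .
qed

lemma sum_exp_lists: "(\<Sum>n\<le>K. \<Sum>ws\<in>exp_lists K n. G n ws) = (\<Sum>ws\<in>exp_lists_le K. G (length ws) ws)"
proof -
  have "(\<Sum>n\<le>K. \<Sum>ws\<in>exp_lists K n. G n ws) = (\<Sum>z\<in>Sigma {..K} (exp_lists K). G (fst z) (snd z))"
    by (subst sum.Sigma) (auto simp: split_def)
  also have "\<dots> = (\<Sum>ws\<in>exp_lists_le K. G (length ws) ws)"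
    by (rule sum.reindex_bij_witness[where i="\<lambda>ws. (length ws, ws)" and j="snd"])
       (auto simp: exp_lists_def exp_lists_le_def)
  finally show ?thesis .
qed

lemma length_le_sum_list: "(\<And>p. p \<in> set ws \<Longrightarrow> 1 \<le> f p) \<Longrightarrow> length ws \<le> (\<Sum>p\<leftarrow>ws. f p :: nat)"
  by (induction ws) (auto, fastforce)

lemma member_le_sum_list': "q \<in> set ws \<Longrightarrow> f q \<le> (\<Sum>p\<leftarrow>ws. f p :: nat)"
  by (induction ws) auto

lemma prod_list_inverse: "(\<Prod>q\<leftarrow>ws. 1 / (f q :: 'k::field)) = 1 / (\<Prod>q\<leftarrow>ws. f q)"
  by (induction ws) simp_all

lemma dynkin_words_eq_exp_lists_le:
  "{ws \<in> dynkin_words (length w). dynkin_word ws = w} =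
   {ws \<in> exp_lists_le (length w). ws \<noteq> [] \<and> dynkin_word ws = w}" (is "?L = ?R")
proof
  show "?L \<subseteq> ?R"
  proof
    fix ws assume "ws \<in> ?L"
    then have ws: "ws \<noteq> []" "\<And>p. p \<in> set ws \<Longrightarrow> 0 < fst p + snd p"
      "(\<Sum>p\<leftarrow>ws. fst p + snd p) = length w" "dynkin_word ws = w"
      by (auto simp: dynkin_words_def)
    have "length ws \<le> length w" using length_le_sum_list[of ws "\<lambda>p. fst p + snd p"] ws by fastforce
    moreover have "set ws \<subseteq> exp_pairs (length w)"
    proof
      fix q assume q: "q \<in> set ws"
      have "fst q + snd q \<le> length w" using member_le_sum_list'[OF q, of "\<lambda>p. fst p + snd p"] ws by simp
      then show "q \<in> exp_pairs (length w)" using ws(2)[OF q] unfolding exp_pairs_def by (cases q) simp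
    qed
    ultimately show "ws \<in> ?R" using ws by (simp add: exp_lists_le_def)
  qed
  show "?R \<subseteq> ?L"
  proof
    fix ws assume ws: "ws \<in> ?R"
    then have "\<And>p. p \<in> set ws \<Longrightarrow> 0 < fst p + snd p"
      by (auto simp: exp_lists_le_def exp_pairs_def)
    moreover have "(\<Sum>p\<leftarrow>ws. fst p + snd p) = length w" using ws by (simp flip: length_dynkin_word)
    ultimately show "ws \<in> ?L" using ws by (simp add: dynkin_words_def)
  qed
qed

definition bch_coeff :: "(nat \<times> nat) list \<Rightarrow> 'k::field_char_0" where
  "bch_coeff ws = (-1) ^ (length ws - 1) / (of_nat (length ws) * (\<Prod>q\<leftarrow>ws. fact (fst q) * fact (snd q)))"

lemma tcoeff_bch_series: "tcoeff (bch_series :: 'k::field_char_0 tser) (w,[]) =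
    (\<Sum>ws\<in>{ws\<in>dynkin_words (length w). dynkin_word ws = w}. bch_coeff ws)"
proof -
  define K where "K = length w"
  let ?G = "\<lambda>ws. if dynkin_word ws = w then fps_ln 1 $ length ws * inv_fact_prod ws else (0 :: 'k)"
  have "tcoeff bch_series (w,[]) = tcoeff (\<Sum>n\<le>K. \<Sum>ws\<in>exp_lists K n.
      tconst (fps_ln 1 $ n * inv_fact_prod ws) * (tmonom (dynkin_word ws, []) :: 'k tser)) (w,[])"
    using order_ge_tcoeff[OF bch_series_eq_upto[of K, unfolded eq_upto_def], of "(w,[])"]
    by (simp add: K_def bw_size_def)
  also have "\<dots> = (\<Sum>n\<le>K. \<Sum>ws\<in>exp_lists K n. ?G ws)"
    unfolding tcoeff_sum by (intro sum.cong refl) (auto simp: tcoeff_tmonom exp_lists_def)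
  also have "\<dots> = (\<Sum>ws\<in>exp_lists_le K. ?G ws)"
    by (rule sum_exp_lists)
  also have "\<dots> = (\<Sum>ws\<in>{ws \<in> exp_lists_le K. ws \<noteq> [] \<and> dynkin_word ws = w}. bch_coeff ws)"
  proof (rule sum.mono_neutral_cong_right)
    show "\<forall>ws\<in>exp_lists_le K - {ws \<in> exp_lists_le K. ws \<noteq> [] \<and> dynkin_word ws = w}. ?G ws = 0"
    proof
      fix ws assume "ws \<in> exp_lists_le K - {ws \<in> exp_lists_le K. ws \<noteq> [] \<and> dynkin_word ws = w}"
      then have "dynkin_word ws \<noteq> w \<or> ws = []" by blast
      then show "?G ws = 0" by (elim disjE) (simp_all add: fps_ln_nth)
    qed
    show "?G ws = bch_coeff ws" if "ws \<in> {ws \<in> exp_lists_le K. ws \<noteq> [] \<and> dynkin_word ws = w}" for ws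
      using that by (simp add: fps_ln_nth inv_fact_prod_def bch_coeff_def prod_list_inverse)
  qed simp_all
  finally show ?thesis
    unfolding dynkin_words_eq_exp_lists_le K_def .
qed

section \<open>Complete filtered vector spaces and algebras\<close>

locale cf_space =
  fixes scale :: "'k::field_char_0 \<Rightarrow> 'a::ab_group_add \<Rightarrow> 'a" and F :: "nat \<Rightarrow> 'a set"
  assumes vs: "vector_space scale" and fil: "filtration scale F" and cpl: "complete_filtration F"
begin

sublocale vector_space scale by (rule vs)

lemma F0 [simp]: "0 \<in> F n" using fil by (simp add: filtration_def)
lemma F_add: "x \<in> F n \<Longrightarrow> y \<in> F n \<Longrightarrow> x + y \<in> F n" using fil by (simp add: filtration_def)
lemma F_scale: "x \<in> F n \<Longrightarrow> scale c x \<in> F n" using fil by (simp add: filtration_def)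
lemma F_uminus: "x \<in> F n \<Longrightarrow> - x \<in> F n"
  using F_scale[of x n "-1"] by simp
lemma F_uminus_iff [simp]: "- x \<in> F n \<longleftrightarrow> x \<in> F n"
  using F_uminus[of x n] F_uminus[of "- x" n] by auto
lemma F_diff: "x \<in> F n \<Longrightarrow> y \<in> F n \<Longrightarrow> x - y \<in> F n"
  using F_add[of x n "- y"] by simp
lemma F_UNIV [simp]: "x \<in> F 0" using fil by (simp add: filtration_def)
lemma F_Suc: "x \<in> F (Suc n) \<Longrightarrow> x \<in> F n" using fil by (auto simp: filtration_def)
lemma F_mono: "m \<le> n \<Longrightarrow> x \<in> F n \<Longrightarrow> x \<in> F m"
  by (induction n rule: dec_induct) (auto dest: F_Suc)
lemma F_sum: "(\<And>i. i \<in> A \<Longrightarrow> f i \<in> F n) \<Longrightarrow> sum f A \<in> F n"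
  by (induction A rule: infinite_finite_induct) (auto intro: F_add)
lemma F_diff_swap: "x - y \<in> F n \<Longrightarrow> y - x \<in> F n"
  using F_uminus[of "x - y" n] by simp
lemma F_diff_trans: "x - y \<in> F n \<Longrightarrow> y - z \<in> F n \<Longrightarrow> x - z \<in> F n"
  using F_add[of "x - y" n "y - z"] by simp
lemma F_diff_add: "x - x' \<in> F n \<Longrightarrow> y - y' \<in> F n \<Longrightarrow> (x + y) - (x' + y') \<in> F n"
  using F_add[of "x - x'" n "y - y'"] by (simp add: algebra_simps)
lemma F_diff_diff: "x - x' \<in> F n \<Longrightarrow> y - y' \<in> F n \<Longrightarrow> (x - y) - (x' - y') \<in> F n"
  using F_diff[of "x - x'" n "y - y'"] by (simp add: algebra_simps)
lemma F_diff_scale: "x - x' \<in> F n \<Longrightarrow> scale c x - scale c x' \<in> F n"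
  using F_scale[of "x - x'" n c] by (simp add: scale_right_diff_distrib)
lemma F_diff_sum: "(\<And>i. i \<in> A \<Longrightarrow> f i - g i \<in> F n) \<Longrightarrow> sum f A - sum g A \<in> F n"
  using F_sum[of A "\<lambda>i. f i - g i" n] by (simp add: sum_subtractf)

lemma hausdorff: "(\<And>n. x \<in> F n) \<Longrightarrow> x = 0"
proof -
  assume x: "\<And>n. x \<in> F n"
  have "\<exists>!a. \<forall>n. a - (\<lambda>n. 0) n \<in> F n"
    using cpl unfolding complete_filtration_def by (erule_tac x="\<lambda>n. 0" in allE) simp
  then show "x = 0" using x by (metis F0 diff_zero)
qed

lemma hausdorff_diff: "(\<And>n. x - y \<in> F n) \<Longrightarrow> x = y"
  using hausdorff[of "x - y"] by simp

lemma flim_eqI: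
  assumes a: "\<And>n. a - s n \<in> F n"
  shows "flim F s = a"
proof -
  have conv: "fconv F s a"
    unfolding fconv_def
  proof
    fix k show "\<exists>N. \<forall>n\<ge>N. s n - a \<in> F k"
      by (rule exI[of _ k]) (auto intro: F_mono[OF _ F_diff_swap[OF a]])
  qed
  have uniq: "L = a" if L: "fconv F s L" for L
  proof (rule hausdorff_diff[symmetric])
    fix k
    obtain N where N: "\<forall>n\<ge>N. s n - L \<in> F k" using L unfolding fconv_def by blast
    let ?n = "max N k"
    have "a - s ?n \<in> F k" by (rule F_mono[OF _ a]) simp
    moreover have "s ?n - L \<in> F k" using N by simp
    ultimately show "a - L \<in> F k" by (rule F_diff_trans)
  qed
  show ?thesis unfolding flim_def using conv uniq by (rule the_equality)
qed

lemma complete_ex: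
  assumes "\<And>n. x (Suc n) - x n \<in> F n"
  shows "\<exists>a. \<forall>n. a - x n \<in> F n"
  using cpl assms unfolding complete_filtration_def by blast

lemma fsuminf_trunc:
  assumes f: "\<And>n. f n \<in> F n"
  shows "fsuminf F f - (\<Sum>i<n. f i) \<in> F n"
proof -
  obtain a where a: "\<forall>n. a - (\<Sum>i<n. f i) \<in> F n"
    using complete_ex[of "\<lambda>n. \<Sum>i<n. f i"] f by auto
  have "fsuminf F f = a" unfolding fsuminf_def by (rule flim_eqI) (use a in auto)
  then show ?thesis using a by simp
qed

end

locale cf_algebra =
  fixes scale :: "'k::field_char_0 \<Rightarrow> 'a::ring \<Rightarrow> 'a" and F :: "nat \<Rightarrow> 'a set"
  assumes assoc_algebra: "cf_assoc_algebra scale F"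
begin

sublocale cf_space scale F
  using assoc_algebra unfolding cf_assoc_algebra_def cf_space_def by blast

lemma F_mult: "x \<in> F m \<Longrightarrow> y \<in> F n \<Longrightarrow> x * y \<in> F (m + n)"
  using assoc_algebra unfolding cf_assoc_algebra_def by blast
lemma F_mult_left: "x \<in> F n \<Longrightarrow> x * y \<in> F n"
  using F_mult[of x n y 0] by simp
lemma F_mult_right: "y \<in> F n \<Longrightarrow> x * y \<in> F n"
  using F_mult[of x 0 y n] by simp
lemma scale_mult_left: "scale c (x * y) = scale c x * y"
  using assoc_algebra unfolding cf_assoc_algebra_def by blast
lemma scale_mult_right: "scale c (x * y) = x * scale c y"
  using assoc_algebra unfolding cf_assoc_algebra_def by blast
lemma F_diff_mult: "x - x' \<in> F n \<Longrightarrow> y - y' \<in> F n \<Longrightarrow> x * y - x' * y' \<in> F n"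
proof -
  assume a: "x - x' \<in> F n" "y - y' \<in> F n"
  have "x * y - x' * y' = (x - x') * y + x' * (y - y')" by (simp add: algebra_simps)
  then show ?thesis using a by (simp add: F_add F_mult_left F_mult_right)
qed

lemma npow_in: "x \<in> F 1 \<Longrightarrow> npow x n \<in> F (Suc n)"
proof (induction n)
  case (Suc n)
  then show ?case using F_mult[of x 1 "npow x n" "Suc n"] by simp
qed simp

lemma npow_diff:
  assumes x: "x \<in> F 1" and y: "y \<in> F 1" and d: "x - y \<in> F m"
  shows "npow x n - npow y n \<in> F (m + n)"
proof (induction n)
  case 0 then show ?case using d by simp
next
  case (Suc n)
  have "npow x (Suc n) - npow y (Suc n) = x * (npow x n - npow y n) + (x - y) * npow y n"
    by (simp add: algebra_simps)
  moreover have "x * (npow x n - npow y n) \<in> F (m + Suc n)"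
    using F_mult[OF x Suc] by simp
  moreover have "(x - y) * npow y n \<in> F (m + Suc n)"
    using F_mult[OF d npow_in[OF y, of n]] by simp
  ultimately show ?case by (simp add: F_add)
qed

text \<open>exp1 z is e^z - 1: exp z = (1, exp1 z) in the unitization.\<close>

definition exp1 :: "'a \<Rightarrow> 'a" where
  "exp1 z = snd (uexp scale F z)"

lemma uexp_eq: "uexp scale F z = (1, exp1 z)"
  by (simp add: exp1_def uexp_def)

definition exp1_partial :: "nat \<Rightarrow> 'a \<Rightarrow> 'a" where
  "exp1_partial n z = (\<Sum>i<n. scale (1 / fact (Suc i)) (npow z i))"

lemma exp1_trunc:
  assumes z: "z \<in> F 1"
  shows "exp1 z - exp1_partial n z \<in> F n"
  unfolding exp1_def uexp_def exp1_partial_def snd_conv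
  by (rule fsuminf_trunc) (rule F_mono[OF _ F_scale[OF npow_in[OF z]]], simp)

lemma exp1_in: "z \<in> F 1 \<Longrightarrow> exp1 z \<in> F 1"
  using F_add[OF exp1_trunc[of z 1], of z] by (simp add: exp1_partial_def)

lemma exp1_partial_diff:
  assumes x: "x \<in> F 1" and y: "y \<in> F 1" and d: "x - y \<in> F n"
  shows "exp1_partial n x - exp1_partial n y \<in> F n"
  unfolding exp1_partial_def
  by (intro F_diff_sum F_diff_scale F_mono[OF _ npow_diff[OF x y d]]) simp

lemma exp1_cong:
  assumes x: "x \<in> F 1" and y: "y \<in> F 1" and d: "x - y \<in> F n"
  shows "exp1 x - exp1 y \<in> F n"
  using F_diff_trans[OF F_diff_trans[OF exp1_trunc[OF x] exp1_partial_diff[OF x y d]]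
      F_diff_swap[OF exp1_trunc[OF y]]] .

text \<open>The terms of degree at least two of exp1 x - exp1 y lie one filtration step deeper than
  x - y, so exp1 x = exp1 y lets x - y descend through all the F n.\<close>

lemma exp1_eq_diff_Suc:
  assumes x: "x \<in> F 1" and y: "y \<in> F 1" and e: "exp1 x = exp1 y"
    and d: "x - y \<in> F (Suc n)"
  shows "x - y \<in> F (Suc (Suc n))"
proof -
  let ?t = "\<lambda>z i. scale (1 / fact (Suc i)) (npow z i)"
  have "exp1_partial (Suc (Suc n)) x - exp1_partial (Suc (Suc n)) y \<in> F (Suc (Suc n))"
    using F_diff_trans[OF F_diff_swap[OF exp1_trunc[OF x]] exp1_trunc[OF y, unfolded e[symmetric]]] .
  moreover have "exp1_partial (Suc (Suc n)) x - exp1_partial (Suc (Suc n)) y =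
      (x - y) + (\<Sum>i\<in>{1..<Suc (Suc n)}. ?t x i - ?t y i)"
    by (simp add: exp1_partial_def atLeast0LessThan[symmetric] sum.atLeast_Suc_lessThan sum_subtractf)
  moreover have "(\<Sum>i\<in>{1..<Suc (Suc n)}. ?t x i - ?t y i) \<in> F (Suc (Suc n))"
  proof (rule F_sum)
    fix i assume i: "i \<in> {1..<Suc (Suc n)}"
    have "npow x i - npow y i \<in> F (Suc n + i)" by (rule npow_diff[OF x y d])
    then have "npow x i - npow y i \<in> F (Suc (Suc n))" by (rule F_mono[rotated]) (use i in auto)
    then show "?t x i - ?t y i \<in> F (Suc (Suc n))" by (rule F_diff_scale)
  qed
  ultimately show ?thesis
    using F_diff by fastforce
qed

lemma exp1_inj:
  assumes x: "x \<in> F 1" and y: "y \<in> F 1" and e: "exp1 x = exp1 y"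
  shows "x = y"
proof (rule hausdorff_diff)
  have "x - y \<in> F (Suc n)" for n
  proof (induction n)
    case 0
    then show ?case using x y by (simp add: F_diff)
  qed (rule exp1_eq_diff_Suc[OF x y e])
  then show "x - y \<in> F n" for n
    by (cases n) simp_all
qed

end

definition letter_val :: "'a \<Rightarrow> 'a \<Rightarrow> bool \<Rightarrow> 'a" where
  "letter_val u v a = (if a then v else u)"

text \<open>word_val u v w is the product of the letters of w under x := u, y := v; the empty word,
  whose value would be a unit, is sent to 0.\<close>

fun word_val :: "'a::ring \<Rightarrow> 'a \<Rightarrow> bool list \<Rightarrow> 'a" where
  "word_val u v [] = 0"
| "word_val u v [a] = letter_val u v a"
| "word_val u v (a # b # w) = letter_val u v a * word_val u v (b # w)"

lemma word_val_Cons: "w \<noteq> [] \<Longrightarrow> word_val u v (a # w) = letter_val u v a * word_val u v w"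
  by (cases w) auto

lemma word_val_append: "w1 \<noteq> [] \<Longrightarrow> w2 \<noteq> [] \<Longrightarrow> word_val u v (w1 @ w2) = word_val u v w1 * word_val u v w2"
proof (induction w1)
  case Nil then show ?case by simp
next
  case (Cons a w1)
  show ?case
  proof (cases "w1 = []")
    case True then show ?thesis using Cons by (simp add: word_val_Cons)
  next
    case False then show ?thesis using Cons by (simp add: word_val_Cons mult.assoc)
  qed
qed

definition words_upto :: "nat \<Rightarrow> bool list set" where
  "words_upto N = {w. 1 \<le> length w \<and> length w \<le> N}"

lemma finite_words_upto [simp]: "finite (words_upto N)"
  unfolding words_upto_def by (rule finite_subset[OF _ finite_words_le[of N]]) auto

context cf_algebra
begin

lemma letter_val_in: "u \<in> F 1 \<Longrightarrow> v \<in> F 1 \<Longrightarrow> letter_val u v a \<in> F 1"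
  by (simp add: letter_val_def)

lemma word_val_in: assumes u: "u \<in> F 1" and v: "v \<in> F 1" shows "word_val u v w \<in> F (length w)"
proof (induction w)
  case (Cons a w)
  show ?case
  proof (cases "w = []")
    case True then show ?thesis using letter_val_in[OF u v] by simp
  next
    case False
    then have "letter_val u v a * word_val u v w \<in> F (1 + length w)"
      by (intro F_mult letter_val_in[OF u v] Cons)
    then show ?thesis using False by (simp add: word_val_Cons)
  qed
qed simp

text \<open>eval_upto u v N evaluates the first tensor factor at x := u, y := v, keeping the words of
  length 1 to N: the constant term is dropped, as A need not be unital.\<close>

definition eval_upto :: "'a \<Rightarrow> 'a \<Rightarrow> nat \<Rightarrow> 'k tser \<Rightarrow> 'a" where
  "eval_upto u v N f = (\<Sum>w\<in>words_upto N. scale (tcoeff f (w,[])) (word_val u v w))"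

lemma eval_upto_add: "eval_upto u v N (f + g) = eval_upto u v N f + eval_upto u v N g"
  by (simp add: eval_upto_def scale_left_distrib sum.distrib)
lemma eval_upto_diff: "eval_upto u v N (f - g) = eval_upto u v N f - eval_upto u v N g"
  by (simp add: eval_upto_def scale_left_diff_distrib sum_subtractf)
lemma eval_upto_0 [simp]: "eval_upto u v N 0 = 0"
  by (simp add: eval_upto_def)
lemma eval_upto_tconst: "eval_upto u v N (tconst c * f) = scale c (eval_upto u v N f)"
  by (simp add: eval_upto_def scale_sum_right)
lemma eval_upto_sum: "eval_upto u v N (sum f A) = (\<Sum>i\<in>A. eval_upto u v N (f i))"
  by (induction A rule: infinite_finite_induct) (auto simp: eval_upto_add)

lemma eval_upto_cong: "eq_upto (Suc N) f g \<Longrightarrow> eval_upto u v N f = eval_upto u v N g"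
  unfolding eval_upto_def
proof (rule sum.cong[OF refl])
  fix w assume "eq_upto (Suc N) f g" "w \<in> words_upto N"
  then have "tcoeff (f - g) (w,[]) = 0" unfolding eq_upto_def by (intro order_ge_tcoeff) (auto simp: words_upto_def bw_size_def)
  then show "scale (tcoeff f (w, [])) (word_val u v w) = scale (tcoeff g (w, [])) (word_val u v w)" by simp
qed

lemma eval_upto_in:
  assumes "order_ge m f" "u \<in> F 1" "v \<in> F 1"
  shows "eval_upto u v N f \<in> F m"
  unfolding eval_upto_def
proof (rule F_sum)
  fix w assume "w \<in> words_upto N"
  show "scale (tcoeff f (w, [])) (word_val u v w) \<in> F m"
  proof (cases "length w < m")
    case True
    then have "tcoeff f (w,[]) = 0" using assms(1) by (intro order_ge_tcoeff) (auto simp: bw_size_def)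
    then show ?thesis by simp
  next
    case False
    then show ?thesis using word_val_in[OF assms(2,3), of w] by (intro F_scale F_mono[of m "length w"]) auto
  qed
qed

lemma eval_upto_xl: "1 \<le> N \<Longrightarrow> eval_upto u v N (xl a) = letter_val u v a"
proof -
  assume N: "1 \<le> N"
  have "eval_upto u v N (xl a) = (\<Sum>w\<in>words_upto N. if w = [a] then word_val u v w else 0)"
    unfolding eval_upto_def by (rule sum.cong) (auto simp: xl_def tcoeff_tmonom)
  also have "\<dots> = word_val u v [a]" using N by (subst sum.delta) (auto simp: words_upto_def)
  finally show ?thesis by simp
qed

lemma scale_mult_scale: "scale a x * scale b y = scale (a * b) (x * y)"
  by (simp add: scale_mult_left[symmetric] scale_mult_right[symmetric])

lemma eval_upto_mult_eq:
  assumes f0: "tcoeff f ([],[]) = 0" and g0: "tcoeff g ([],[]) = 0"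
  shows "eval_upto u v N (f * g) =
    (\<Sum>q\<in>{q \<in> words_upto N \<times> words_upto N. length (fst q) + length (snd q) \<le> N}.
       scale (tcoeff f (fst q,[]) * tcoeff g (snd q,[])) (word_val u v (fst q) * word_val u v (snd q)))"
proof -
  define H where "H z = scale (tcoeff f (take (snd z) (fst z), []) * tcoeff g (drop (snd z) (fst z), []))
    (word_val u v (fst z))" for z
  have "eval_upto u v N (f * g) = (\<Sum>z\<in>Sigma (words_upto N) (\<lambda>w. {..length w}). H z)"
    unfolding eval_upto_def tcoeff_mult_left H_def by (simp add: scale_sum_left sum.Sigma split_def)
  also have "\<dots> = (\<Sum>z\<in>Sigma (words_upto N) (\<lambda>w. {1..<length w}). H z)"
  proof (rule sum.mono_neutral_right)
    show "\<forall>z\<in>Sigma (words_upto N) (\<lambda>w. {..length w}) - Sigma (words_upto N) (\<lambda>w. {1..<length w}). H z = 0"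
    proof
      fix z assume "z \<in> Sigma (words_upto N) (\<lambda>w. {..length w}) - Sigma (words_upto N) (\<lambda>w. {1..<length w})"
      then have "snd z = 0 \<or> snd z = length (fst z)" by (cases z) auto
      then show "H z = 0" by (elim disjE) (simp_all add: H_def f0 g0)
    qed
  qed auto
  also have "\<dots> = (\<Sum>q\<in>{q \<in> words_upto N \<times> words_upto N. length (fst q) + length (snd q) \<le> N}.
       scale (tcoeff f (fst q,[]) * tcoeff g (snd q,[])) (word_val u v (fst q) * word_val u v (snd q)))"
  proof (rule sum.reindex_bij_witness[where i="\<lambda>q. (fst q @ snd q, length (fst q))"
                                        and j="\<lambda>z. (take (snd z) (fst z), drop (snd z) (fst z))"])
    fix z assume "z \<in> Sigma (words_upto N) (\<lambda>w. {1..<length w})"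
    then have ne: "take (snd z) (fst z) \<noteq> []" "drop (snd z) (fst z) \<noteq> []" by (cases z, auto)+
    then show "scale (tcoeff f (fst (take (snd z) (fst z), drop (snd z) (fst z)), []) *
        tcoeff g (snd (take (snd z) (fst z), drop (snd z) (fst z)), []))
        (word_val u v (fst (take (snd z) (fst z), drop (snd z) (fst z))) *
         word_val u v (snd (take (snd z) (fst z), drop (snd z) (fst z)))) = H z"
      using word_val_append[OF ne, of u v] by (simp add: H_def)
  qed (auto simp: words_upto_def)
  finally show ?thesis .
qed

text \<open>Modulo F (N + 1), eval_upto is multiplicative on series without constant term: the products
  of words missing from eval_upto u v N (f * g) are longer than N.\<close>

lemma eval_upto_mult:
  assumes u: "u \<in> F 1" and v: "v \<in> F 1" and f: "order_ge 1 f" and g: "order_ge 1 g"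
  shows "eval_upto u v N (f * g) - eval_upto u v N f * eval_upto u v N g \<in> F (Suc N)"
proof -
  define G where "G q = scale (tcoeff f (fst q,[]) * tcoeff g (snd q,[]))
    (word_val u v (fst q) * word_val u v (snd q))" for q
  let ?W = "words_upto N \<times> words_upto N"
  define P where "P = {q \<in> ?W. length (fst q) + length (snd q) \<le> N}"
  define Q where "Q = {q \<in> ?W. \<not> length (fst q) + length (snd q) \<le> N}"
  have "eval_upto u v N f * eval_upto u v N g = (\<Sum>q\<in>?W. G q)"
    unfolding eval_upto_def sum_product sum.cartesian_product G_def
    by (simp add: scale_mult_scale split_def)
  also have "\<dots> = (\<Sum>q\<in>P \<union> Q. G q)"
    by (rule sum.cong) (auto simp: P_def Q_def)
  also have "\<dots> = (\<Sum>q\<in>P. G q) + (\<Sum>q\<in>Q. G q)"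
    by (rule sum.union_disjoint) (auto simp: P_def Q_def)
  finally have prod: "eval_upto u v N f * eval_upto u v N g = (\<Sum>q\<in>P. G q) + (\<Sum>q\<in>Q. G q)" .
  have "(\<Sum>q\<in>Q. G q) \<in> F (Suc N)"
  proof (rule F_sum)
    fix q assume q: "q \<in> Q"
    have "word_val u v (fst q) * word_val u v (snd q) \<in> F (length (fst q) + length (snd q))"
      by (intro F_mult word_val_in u v)
    then show "G q \<in> F (Suc N)" unfolding G_def
      by (intro F_scale F_mono[of "Suc N" "length (fst q) + length (snd q)"]) (use q in \<open>auto simp: Q_def\<close>)
  qed
  moreover have "eval_upto u v N (f * g) = (\<Sum>q\<in>P. G q)"
    unfolding P_def G_def
    by (rule eval_upto_mult_eq) (simp_all add: order_ge_tcoeff[OF f] order_ge_tcoeff[OF g] bw_size_def)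
  ultimately show ?thesis
    unfolding prod using F_uminus by (simp add: diff_add_eq_diff_diff_swap)
qed

lemma eval_upto_power:
  assumes u: "u \<in> F 1" and v: "v \<in> F 1" and f: "order_ge 1 f"
  shows "eval_upto u v N (f ^ Suc n) - npow (eval_upto u v N f) n \<in> F (Suc N)"
proof (induction n)
  case 0 then show ?case by simp
next
  case (Suc n)
  have "eval_upto u v N (f * f ^ Suc n) - eval_upto u v N f * eval_upto u v N (f ^ Suc n) \<in> F (Suc N)"
    by (rule eval_upto_mult[OF u v f order_ge_power_ge[OF f]]) simp
  moreover have "eval_upto u v N f * eval_upto u v N (f ^ Suc n) - eval_upto u v N f * npow (eval_upto u v N f) n \<in> F (Suc N)"
    by (rule F_diff_mult[OF _ Suc]) simp
  ultimately have "eval_upto u v N (f * f ^ Suc n) - eval_upto u v N f * npow (eval_upto u v N f) n \<in> F (Suc N)"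
    by (rule F_diff_trans)
  then show ?case by simp
qed

lemma exp1_eval_upto:
  assumes u: "u \<in> F 1" and v: "v \<in> F 1" and f: "order_ge 1 f"
  shows "exp1 (eval_upto u v N f) - eval_upto u v N (texp f - 1) \<in> F (Suc N)"
proof -
  let ?z = "eval_upto u v N f"
  have z: "?z \<in> F 1" by (rule eval_upto_in[OF f u v])
  have "exp1_partial (Suc N) ?z - exp1_partial N ?z \<in> F (Suc N)"
    unfolding exp1_partial_def using F_scale[OF npow_in[OF z, of N]] by simp
  with exp1_trunc[OF z, of "Suc N"] have t1: "exp1 ?z - exp1_partial N ?z \<in> F (Suc N)"
    by (rule F_diff_trans)
  have "(\<Sum>i<Suc N. tconst (1 / fact i) * f ^ i) = 1 + (\<Sum>i<N. tconst (1 / fact (Suc i)) * f ^ Suc i)"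
    by (simp only: sum.lessThan_Suc_shift) simp
  then have "eq_upto (Suc N) (texp f - 1) (\<Sum>i<N. tconst (1 / fact (Suc i)) * f ^ Suc i)"
    using eq_upto_diff[OF texp_eq_upto_trunc[OF f, of N] eq_upto_refl[of "Suc N" 1]]
    by (simp add: lessThan_Suc_atMost)
  then have "eval_upto u v N (texp f - 1) = (\<Sum>i<N. scale (1 / fact (Suc i)) (eval_upto u v N (f ^ Suc i)))"
    by (simp add: eval_upto_cong eval_upto_sum eval_upto_tconst)
  moreover have "(\<Sum>i<N. scale (1 / fact (Suc i)) (eval_upto u v N (f ^ Suc i))) - exp1_partial N ?z \<in> F (Suc N)"
    unfolding exp1_partial_def by (intro F_diff_sum F_diff_scale eval_upto_power[OF u v f])
  ultimately show ?thesis
    using F_diff_trans[OF t1] F_diff_swap by auto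
qed

lemma eval_upto_homog:
  assumes h: "homog M f" and M: "1 \<le> M" "M \<le> N"
  shows "eval_upto u v N f = (\<Sum>w\<in>{w. length w = M}. scale (tcoeff f (w,[])) (word_val u v w))"
  unfolding eval_upto_def
proof (rule sum.mono_neutral_right)
  show "finite (words_upto N)" by simp
  show "{w. length w = M} \<subseteq> words_upto N" using M by (auto simp: words_upto_def)
  show "\<forall>w\<in>words_upto N - {w. length w = M}. scale (tcoeff f (w, [])) (word_val u v w) = 0"
    using homog_tcoeff[OF h] by (auto simp: bw_size_def)
qed

end

locale filtered_bracket = cf_space scale F
  for scale :: "'k::field_char_0 \<Rightarrow> 'a::ab_group_add \<Rightarrow> 'a" and F :: "nat \<Rightarrow> 'a set" +
  fixes br :: "'a \<Rightarrow> 'a \<Rightarrow> 'a"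
  assumes br_add1: "br (x + y) z = br x z + br y z"
    and br_add2: "br x (y + z) = br x y + br x z"
    and br_F: "x \<in> F m \<Longrightarrow> y \<in> F n \<Longrightarrow> br x y \<in> F (m + n)"
begin

lemma br_diff1: "br (x - y) z = br x z - br y z"
  using br_add1[of "x - y" y z] by (simp add: algebra_simps)
lemma br_diff2: "br x (y - z) = br x y - br x z"
  using br_add2[of x "y - z" z] by (simp add: algebra_simps)

lemma rnest_in: "zs \<noteq> [] \<Longrightarrow> (\<And>z. z \<in> set zs \<Longrightarrow> z \<in> F 1) \<Longrightarrow> rnest br zs \<in> F (length zs)"
proof (induction zs rule: induct_list012)
  case (3 a b zs)
  have "br a (rnest br (b # zs)) \<in> F (1 + length (b # zs))"
    by (rule br_F) (use 3 in auto)
  then show ?case by simp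
qed auto

lemma rnest_diff:
  assumes k: "1 \<le> k"
  shows "list_all2 (\<lambda>z z'. z - z' \<in> F k \<and> z \<in> F 1 \<and> z' \<in> F 1) zs zs' \<Longrightarrow> zs \<noteq> [] \<Longrightarrow>
         rnest br zs - rnest br zs' \<in> F (k + length zs - 1)"
proof (induction zs arbitrary: zs' rule: induct_list012)
  case 1 then show ?case by simp
next
  case (2 a)
  obtain a' where zs': "zs' = [a']" and d: "a - a' \<in> F k"
    using "2.prems"(1) unfolding list_all2_Cons1 list_all2_Nil by blast
  show ?case using d by (simp add: zs')
next
  case (3 a b zs)
  obtain a' b' zs'' where zs': "zs' = a' # b' # zs''" and aa: "a - a' \<in> F k" "a \<in> F 1" "a' \<in> F 1"
    and rest: "list_all2 (\<lambda>z z'. z - z' \<in> F k \<and> z \<in> F 1 \<and> z' \<in> F 1) (b # zs) (b' # zs'')"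
    using "3.prems"(1) unfolding list_all2_Cons1 by blast
  have IH: "rnest br (b # zs) - rnest br (b' # zs'') \<in> F (k + length (b # zs) - 1)"
    by (rule "3.IH"(2)[OF rest]) simp
  have in_F1: "z \<in> F 1" if z: "z \<in> set (b # zs)" for z
  proof -
    obtain i where i: "i < length (b # zs)" "(b # zs) ! i = z" using z unfolding in_set_conv_nth by blast
    then show ?thesis using rest unfolding list_all2_conv_all_nth by blast
  qed
  have R: "rnest br (b # zs) \<in> F (length (b # zs))"
    by (rule rnest_in) (simp, rule in_F1)
  have "br a (rnest br (b # zs)) - br a' (rnest br (b' # zs'')) =
        br (a - a') (rnest br (b # zs)) + br a' (rnest br (b # zs) - rnest br (b' # zs''))"
    by (simp add: br_diff1 br_diff2)
  moreover have "br (a - a') (rnest br (b # zs)) \<in> F (k + length (a # b # zs) - 1)"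
    using br_F[OF aa(1) R] by simp
  moreover have "br a' (rnest br (b # zs) - rnest br (b' # zs'')) \<in> F (k + length (a # b # zs) - 1)"
  proof -
    have "br a' (rnest br (b # zs) - rnest br (b' # zs'')) \<in> F (1 + (k + length (b # zs) - 1))"
      by (rule br_F[OF aa(3) IH])
    then show ?thesis using k by simp
  qed
  ultimately show ?case by (simp add: zs' F_add)
qed

lemma length_dynkin_letters: "length (dynkin_letters x y ws) = (\<Sum>p\<leftarrow>ws. fst p + snd p)"
  by (induction ws) (simp_all add: dynkin_letters_def)

lemma set_dynkin_letters: "set (dynkin_letters x y ws) \<subseteq> {x, y}"
  by (induction ws) (auto simp: dynkin_letters_def)

lemma dynkin_words_pos: "ws \<in> dynkin_words N \<Longrightarrow> 1 \<le> N"
proof -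
  assume ws: "ws \<in> dynkin_words N"
  then obtain p ps where "ws = p # ps" "0 < fst p + snd p" by (cases ws) (auto simp: dynkin_words_def)
  then show "1 \<le> N" using ws by (auto simp: dynkin_words_def)
qed

lemma dynkin_term_in:
  assumes x: "x \<in> F 1" and y: "y \<in> F 1"
  shows "dynkin_term scale br x y N \<in> F N"
  unfolding dynkin_term_def
proof (rule F_sum)
  fix ws assume ws: "ws \<in> dynkin_words N"
  have len: "length (dynkin_letters x y ws) = N"
    using ws by (simp add: length_dynkin_letters dynkin_words_def)
  have "dynkin_letters x y ws \<noteq> []"
    using dynkin_words_pos[OF ws] len by auto
  then have "rnest br (dynkin_letters x y ws) \<in> F (length (dynkin_letters x y ws))"
    by (rule rnest_in) (use set_dynkin_letters[of x y ws] x y in auto)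
  then show "scale (dynkin_coeff N ws) (rnest br (dynkin_letters x y ws)) \<in> F N"
    using ws by (simp add: F_scale length_dynkin_letters dynkin_words_def)
qed

lemma dynkin_letters_close:
  assumes "x - x' \<in> F k" "y - y' \<in> F k" "x \<in> F 1" "y \<in> F 1" "x' \<in> F 1" "y' \<in> F 1"
  shows "list_all2 (\<lambda>z z'. z - z' \<in> F k \<and> z \<in> F 1 \<and> z' \<in> F 1)
    (dynkin_letters x y ws) (dynkin_letters x' y' ws)"
proof (induction ws)
  case Nil then show ?case by (simp add: dynkin_letters_def)
next
  case (Cons p ws)
  have r: "list_all2 (\<lambda>z z'. z - z' \<in> F k \<and> z \<in> F 1 \<and> z' \<in> F 1) (replicate n a) (replicate n a')"
    if "a - a' \<in> F k" "a \<in> F 1" "a' \<in> F 1" for n a a'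
    using that by (induction n) auto
  show ?case using Cons r[OF assms(1,3,5)] r[OF assms(2,4,6)]
    by (simp add: dynkin_letters_def list_all2_appendI)
qed

lemma dynkin_term_diff:
  assumes k: "1 \<le> k" and N: "1 \<le> N"
    and d: "x - x' \<in> F k" "y - y' \<in> F k" and xy: "x \<in> F 1" "y \<in> F 1" "x' \<in> F 1" "y' \<in> F 1"
  shows "dynkin_term scale br x y N - dynkin_term scale br x' y' N \<in> F (k + N - 1)"
  unfolding dynkin_term_def
proof (rule F_diff_sum, rule F_diff_scale)
  fix ws assume ws: "ws \<in> dynkin_words N"
  have len: "length (dynkin_letters x y ws) = N"
    using ws by (simp add: length_dynkin_letters dynkin_words_def)
  have ne: "dynkin_letters x y ws \<noteq> []"
    using N len by auto
  have "rnest br (dynkin_letters x y ws) - rnest br (dynkin_letters x' y' ws) \<in> F (k + length (dynkin_letters x y ws) - 1)"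
    by (rule rnest_diff[OF k dynkin_letters_close[OF d xy] ne])
  then show "rnest br (dynkin_letters x y ws) - rnest br (dynkin_letters x' y' ws) \<in> F (k + N - 1)"
    using ws by (simp add: length_dynkin_letters dynkin_words_def)
qed

lemma dynkin_words_0: "dynkin_words 0 = {}"
  using dynkin_words_pos by fastforce

lemma dynkin_term_0 [simp]: "dynkin_term scale br x y 0 = 0"
  by (simp add: dynkin_term_def dynkin_words_0)

lemma dynkin_words_1: "dynkin_words 1 = {[(1,0)], [(0,1)]}"
proof (rule set_eqI, rule iffI)
  fix ws assume ws: "ws \<in> dynkin_words 1"
  then obtain p ps where wsp: "ws = p # ps" by (cases ws) (auto simp: dynkin_words_def)
  have pos: "\<forall>q\<in>set ws. 0 < fst q + snd q" and s: "(\<Sum>q\<leftarrow>ws. fst q + snd q) = 1"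
    using ws by (auto simp: dynkin_words_def)
  have pp: "0 < fst p + snd p" using pos wsp by auto
  have ss: "fst p + snd p + (\<Sum>q\<leftarrow>ps. fst q + snd q) = 1" using s wsp by simp
  have p1: "fst p + snd p = 1" using pp ss by linarith
  have ps0: "(\<Sum>q\<leftarrow>ps. fst q + snd q) = 0" using pp ss by linarith
  have "ps = []"
  proof (rule ccontr)
    assume "ps \<noteq> []"
    then obtain q qs where "ps = q # qs" by (cases ps) auto
    then have "0 < fst q + snd q" using pos wsp by simp
    then show False using ps0 \<open>ps = q # qs\<close> by simp
  qed
  moreover have "p = (1,0) \<or> p = (0,1)" using p1 by (cases p) auto
  ultimately show "ws \<in> {[(1,0)], [(0,1)]}" using wsp by auto
qed (auto simp: dynkin_words_def)

lemma dynkin_term_1: "dynkin_term scale br x y 1 = x + y"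
  unfolding dynkin_term_def dynkin_words_1 by (simp add: dynkin_coeff_def dynkin_letters_def)

abbreviation dynkin_C :: "'a \<Rightarrow> 'a \<Rightarrow> 'a" where
  "dynkin_C \<equiv> lie_C scale br F"

lemma dynkin_C_trunc:
  assumes x: "x \<in> F 1" and y: "y \<in> F 1"
  shows "dynkin_C x y - (\<Sum>i<n. dynkin_term scale br x y i) \<in> F n"
  unfolding lie_C_def by (rule fsuminf_trunc) (rule dynkin_term_in[OF x y])

lemma dynkin_C_in: "x \<in> F 1 \<Longrightarrow> y \<in> F 1 \<Longrightarrow> dynkin_C x y \<in> F 1"
  using dynkin_C_trunc[of x y 1] by simp

definition bch :: "'a \<Rightarrow> 'a \<Rightarrow> 'a" where
  "bch x y = dynkin_C x y - x - y"

lemma bch_trunc: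
  assumes x: "x \<in> F 1" and y: "y \<in> F 1"
  shows "bch x y - (\<Sum>i\<in>{2..<Suc (Suc n)}. dynkin_term scale br x y i) \<in> F (Suc (Suc n))"
proof -
  let ?D = "dynkin_term scale br x y"
  have "(\<Sum>i<Suc (Suc n). ?D i) = (\<Sum>i\<in>{0..<Suc (Suc n)}. ?D i)" by (simp add: atLeast0LessThan)
  also have "\<dots> = ?D 0 + (\<Sum>i\<in>{Suc 0..<Suc (Suc n)}. ?D i)" by (rule sum.atLeast_Suc_lessThan) simp
  also have "(\<Sum>i\<in>{Suc 0..<Suc (Suc n)}. ?D i) = ?D 1 + (\<Sum>i\<in>{Suc (Suc 0)..<Suc (Suc n)}. ?D i)"
    by (subst sum.atLeast_Suc_lessThan) simp_all
  finally have e: "(\<Sum>i<Suc (Suc n). ?D i) = x + y + (\<Sum>i\<in>{2..<Suc (Suc n)}. ?D i)"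
    using dynkin_term_1 by (simp only: dynkin_term_0 One_nat_def numeral_2_eq_2 add_0_left add.assoc)
  have "dynkin_C x y - (\<Sum>i<Suc (Suc n). ?D i) \<in> F (Suc (Suc n))" by (rule dynkin_C_trunc[OF x y])
  then show ?thesis unfolding e bch_def by (simp add: algebra_simps)
qed

lemma bch_in: "x \<in> F 1 \<Longrightarrow> y \<in> F 1 \<Longrightarrow> bch x y \<in> F 2"
  using bch_trunc[of x y 0] by (simp add: numeral_2_eq_2)

lemma bch_diff:
  assumes k: "1 \<le> k" and d: "x - x' \<in> F k" "y - y' \<in> F k"
    and xy: "x \<in> F 1" "y \<in> F 1" "x' \<in> F 1" "y' \<in> F 1"
  shows "bch x y - bch x' y' \<in> F (Suc k)"
proof -
  obtain n where n: "k = Suc n" using k by (cases k) auto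
  let ?S = "\<lambda>x y. (\<Sum>i\<in>{2..<Suc (Suc n)}. dynkin_term scale br x y i)"
  have "?S x y - ?S x' y' \<in> F (Suc k)"
  proof (rule F_diff_sum)
    fix i assume i: "i \<in> {2..<Suc (Suc n)}"
    have "dynkin_term scale br x y i - dynkin_term scale br x' y' i \<in> F (k + i - 1)"
      by (rule dynkin_term_diff[OF k _ d xy]) (use i in auto)
    then show "dynkin_term scale br x y i - dynkin_term scale br x' y' i \<in> F (Suc k)"
      by (rule F_mono[rotated]) (use i in auto)
  qed
  moreover have "bch x y - ?S x y \<in> F (Suc k)" using bch_trunc[OF xy(1,2), of n] n by simp
  moreover have "bch x' y' - ?S x' y' \<in> F (Suc k)" using bch_trunc[OF xy(3,4), of n] n by simp
  ultimately have "(bch x y - ?S x y) + (?S x y - ?S x' y') - (bch x' y' - ?S x' y') \<in> F (Suc k)"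
    by (metis F_add F_diff)
  then show ?thesis by simp
qed

section \<open>The BCH recursion\<close>

context
  fixes P :: "'a \<Rightarrow> 'a"
  assumes P_linear: "Vector_Spaces.linear scale scale P"
    and P_filtration: "\<forall>n. P ` F n \<subseteq> F n"
begin

lemma P_diff: "P (x - y) = P x - P y"
  using module_hom.diff[OF P_linear[unfolded linear_iff_module_hom]] .

lemma P_F: "x \<in> F n \<Longrightarrow> P x \<in> F n"
  using P_filtration by blast

definition chi_step :: "'a \<Rightarrow> 'a \<Rightarrow> 'a" where
  "chi_step a c = a - (dynkin_C (P c) (c - P c) - P c - (c - P c))"

lemma chi_step_eq: "chi_step a c = a - bch (P c) (c - P c)"
  by (simp add: chi_step_def bch_def)

lemma chi_step_in: "a \<in> F 1 \<Longrightarrow> c \<in> F 1 \<Longrightarrow> chi_step a c \<in> F 1"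
  unfolding chi_step_eq
  by (intro F_diff F_mono[OF _ bch_in] P_F) (simp_all add: F_diff P_F)

text \<open>The recursion is a contraction: BCH has no terms of degree one.\<close>

lemma chi_step_diff:
  assumes a: "a \<in> F 1" and c: "c \<in> F 1" "c' \<in> F 1" and d: "c - c' \<in> F k"
  shows "chi_step a c - chi_step a c' \<in> F (Suc k)"
proof (cases "k = 0")
  case True
  then show ?thesis using chi_step_in[OF a c(1)] chi_step_in[OF a c(2)] by (simp add: F_diff)
next
  case False
  have "bch (P c') (c' - P c') - bch (P c) (c - P c) \<in> F (Suc k)"
  proof (rule bch_diff)
    show "P c' - P c \<in> F k" using P_F[OF F_diff_swap[OF d]] by (simp add: P_diff)
    show "c' - P c' - (c - P c) \<in> F k"
      using F_diff[OF F_diff_swap[OF d] P_F[OF F_diff_swap[OF d]]] by (simp add: P_diff algebra_simps)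
  qed (use c False in \<open>simp_all add: P_F F_diff\<close>)
  then show ?thesis by (simp add: chi_step_eq)
qed

lemma chi_iterates:
  assumes a: "a \<in> F 1"
  shows "(chi_step a ^^ n) a \<in> F 1 \<and> (chi_step a ^^ Suc n) a - (chi_step a ^^ n) a \<in> F (Suc n)"
proof (induction n)
  case 0
  then show ?case using a chi_step_in[OF a a] by (simp add: F_diff)
next
  case (Suc n)
  then have "(chi_step a ^^ Suc n) a \<in> F 1" using chi_step_in[OF a] by simp
  with Suc show ?case
    using chi_step_diff[OF a, of "(chi_step a ^^ Suc n) a" "(chi_step a ^^ n) a" "Suc n"] by simp
qed

lemma bch_chi_eq_flim: "bch_chi F dynkin_C P a = flim F (\<lambda>n. (chi_step a ^^ n) a)"
  unfolding bch_chi_def chi_step_def[abs_def] by (rule refl)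

lemma bch_chi_limit:
  assumes a: "a \<in> F 1"
  shows "bch_chi F dynkin_C P a - (chi_step a ^^ n) a \<in> F n"
proof -
  obtain chi where chi: "\<And>n. chi - (chi_step a ^^ n) a \<in> F n"
    using complete_ex[of "\<lambda>n. (chi_step a ^^ n) a"] chi_iterates[OF a] F_Suc by blast
  have "bch_chi F dynkin_C P a = chi"
    unfolding bch_chi_eq_flim by (rule flim_eqI[OF chi])
  then show ?thesis using chi by simp
qed

lemma bch_chi_in: "a \<in> F 1 \<Longrightarrow> bch_chi F dynkin_C P a \<in> F 1"
  using F_add[OF bch_chi_limit[of a 1] chi_iterates[of a 1, THEN conjunct1]] by simp

lemma bch_chi_fixpoint:
  assumes a: "a \<in> F 1"
  shows "dynkin_C (P (bch_chi F dynkin_C P a)) (bch_chi F dynkin_C P a - P (bch_chi F dynkin_C P a)) = a"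
proof -
  let ?chi = "bch_chi F dynkin_C P a" and ?c = "\<lambda>n. (chi_step a ^^ n) a"
  have "?chi - chi_step a ?chi \<in> F (Suc n)" for n
  proof -
    have "chi_step a (?c n) - chi_step a ?chi \<in> F (Suc n)"
      using chi_step_diff[OF a] chi_iterates[OF a] bch_chi_in[OF a] bch_chi_limit[OF a]
      by (simp add: F_diff_swap)
    from F_add[OF bch_chi_limit[OF a, of "Suc n"] this] show ?thesis by simp
  qed
  then have "?chi = chi_step a ?chi"
    by (intro hausdorff_diff) (metis F_UNIV not0_implies_Suc)
  then show ?thesis
    unfolding chi_step_def by (simp add: algebra_simps)
qed

lemma bch_chi_cong:
  assumes C: "\<And>x y. x \<in> F 1 \<Longrightarrow> y \<in> F 1 \<Longrightarrow> C x y = dynkin_C x y" and a: "a \<in> F 1"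
  shows "bch_chi F C P a = bch_chi F dynkin_C P a"
proof -
  let ?f = "\<lambda>c. a - (C (P c) (c - P c) - P c - (c - P c))"
  have "(?f ^^ n) a = (chi_step a ^^ n) a" for n
  proof (induction n)
    case (Suc n)
    let ?c = "(chi_step a ^^ n) a"
    have c: "?c \<in> F 1" using chi_iterates[OF a] by blast
    have "(?f ^^ Suc n) a = ?f ?c" by (simp only: funpow.simps comp_apply Suc.IH)
    also have "\<dots> = chi_step a ?c"
      by (simp only: chi_step_def[of a ?c] C[OF P_F[OF c] F_diff[OF c P_F[OF c]]])
    finally show ?case by simp
  qed simp
  then show ?thesis
    unfolding bch_chi_eq_flim by (simp only: bch_chi_def)
qed

lemma bch_D_cong:
  assumes C: "\<And>x y. x \<in> F 1 \<Longrightarrow> y \<in> F 1 \<Longrightarrow> C x y = dynkin_C x y" and a: "a \<in> F 1"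
  shows "bch_D F C P a = bch_D F dynkin_C P a"
  using bch_chi_cong[OF C a] by (simp add: bch_D_def)

lemma bch_D_in:
  assumes a: "a \<in> F 1"
  shows "fst (bch_D F dynkin_C P a) \<in> F 1" "snd (bch_D F dynkin_C P a) \<in> F 1"
  using bch_chi_in[OF a] by (simp_all add: bch_D_def P_F F_diff)

lemma bch_D_right_inverse: "a \<in> F 1 \<Longrightarrow> case_prod dynkin_C (bch_D F dynkin_C P a) = a"
  using bch_chi_fixpoint by (simp add: bch_D_def)

end

end

section \<open>The Baker-Campbell-Hausdorff theorem in a complete filtered algebra\<close>

lemma finite_dynkin_words: "finite (dynkin_words M)"
proof (rule finite_subset)
  show "dynkin_words M \<subseteq> {ws. set ws \<subseteq> {..M} \<times> {..M} \<and> length ws \<le> M}"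
  proof
    fix ws assume ws: "ws \<in> dynkin_words M"
    then have pos: "\<And>p. p \<in> set ws \<Longrightarrow> 0 < fst p + snd p" and s: "(\<Sum>p\<leftarrow>ws. fst p + snd p) = M"
      by (auto simp: dynkin_words_def)
    have "length ws \<le> M" using length_le_sum_list[of ws "\<lambda>p. fst p + snd p"] pos s by fastforce
    moreover have "set ws \<subseteq> {..M} \<times> {..M}"
    proof
      fix q assume q: "q \<in> set ws"
      have "fst q + snd q \<le> M" using member_le_sum_list'[OF q, of "\<lambda>p. fst p + snd p"] s by simp
      then show "q \<in> {..M} \<times> {..M}" by (cases q) simp
    qed
    ultimately show "ws \<in> {ws. set ws \<subseteq> {..M} \<times> {..M} \<and> length ws \<le> M}" by simp
  qed
  show "finite {ws. set ws \<subseteq> {..M} \<times> {..M} \<and> length ws \<le> M}"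
    by (rule finite_lists_length_le) simp
qed

lemma length_dynkin_word_dynkin_words: "ws \<in> dynkin_words M \<Longrightarrow> length (dynkin_word ws) = M"
  by (simp add: length_dynkin_word dynkin_words_def)

lemma dynkin_letters_letter_val:
  "dynkin_letters (letter_val u v False) (letter_val u v True) ws = map (letter_val u v) (dynkin_word ws)"
  by (induction ws) (simp_all add: dynkin_word_def dynkin_letters_def)

context cf_algebra
begin

sublocale comm: filtered_bracket scale F commutator
proof
  show "commutator (x + y) z = commutator x z + commutator y z" for x y z
    by (simp add: commutator_def algebra_simps)
  show "commutator x (y + z) = commutator x y + commutator x z" for x y z
    by (simp add: commutator_def algebra_simps)
  show "x \<in> F m \<Longrightarrow> y \<in> F n \<Longrightarrow> commutator x y \<in> F (m + n)" for x y m n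
    using F_mult[of x m y n] F_mult[of y n x m] by (simp add: commutator_def F_diff add.commute)
qed

definition lie_word_val :: "'a \<Rightarrow> 'a \<Rightarrow> bool list \<Rightarrow> 'a" where
  "lie_word_val u v w = rnest commutator (map (letter_val u v) w)"

lemma lie_word_val_simps:
  "lie_word_val u v [a] = letter_val u v a"
  "lie_word_val u v (a # b # w) =
     letter_val u v a * lie_word_val u v (b # w) - lie_word_val u v (b # w) * letter_val u v a"
  by (simp_all add: lie_word_val_def commutator_def)

lemma eval_upto_lie_word:
  assumes u: "u \<in> F 1" and v: "v \<in> F 1"
  shows "w \<noteq> [] \<Longrightarrow> length w \<le> N \<Longrightarrow> eval_upto u v N (lie_word w) - lie_word_val u v w \<in> F (Suc N)"
proof (induction w rule: induct_list012)
  case (2 a) then show ?case by (simp add: lie_word_val_simps eval_upto_xl)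
next
  case (3 a b w)
  let ?R = "lie_word (b # w) :: 'k tser"
  have N: "1 \<le> N" using 3 by simp
  have IH: "eval_upto u v N ?R - lie_word_val u v (b # w) \<in> F (Suc N)" using 3 by simp
  have R1: "order_ge 1 ?R" by (rule order_ge_lie_word) simp
  have e1: "eval_upto u v N (xl a * ?R) - letter_val u v a * eval_upto u v N ?R \<in> F (Suc N)"
    using eval_upto_mult[OF u v order_ge_xl R1, of N] by (simp add: eval_upto_xl[OF N])
  have e2: "eval_upto u v N (?R * xl a) - eval_upto u v N ?R * letter_val u v a \<in> F (Suc N)"
    using eval_upto_mult[OF u v R1 order_ge_xl, of N] by (simp add: eval_upto_xl[OF N])
  have e3: "letter_val u v a * eval_upto u v N ?R - eval_upto u v N ?R * letter_val u v a -
            (letter_val u v a * lie_word_val u v (b # w) - lie_word_val u v (b # w) * letter_val u v a) \<in> F (Suc N)"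
    by (intro F_diff_diff F_diff_mult IH) simp_all
  have "eval_upto u v N (lie_word (a # b # w)) = eval_upto u v N (xl a * ?R) - eval_upto u v N (?R * xl a)"
    by (simp add: eval_upto_diff)
  then show ?case using F_diff_trans[OF F_diff_diff[OF e1 e2] e3] by (simp add: lie_word_val_simps)
qed simp

lemma of_nat_scale_dynkin_term:
  assumes M: "1 \<le> M"
  shows "scale (of_nat M) (dynkin_term scale commutator u v M) =
         (\<Sum>ws\<in>dynkin_words M. scale (bch_coeff ws) (lie_word_val u v (dynkin_word ws)))"
  unfolding dynkin_term_def scale_sum_right
proof (rule sum.cong[OF refl])
  fix ws assume ws: "ws \<in> dynkin_words M"
  have "of_nat M * dynkin_coeff M ws = (bch_coeff ws :: 'k)"
    using M ws by (simp add: dynkin_words_def dynkin_coeff_def bch_coeff_def field_simps)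
  moreover have "dynkin_letters u v ws = map (letter_val u v) (dynkin_word ws)"
    using dynkin_letters_letter_val[of u v ws] by (simp add: letter_val_def)
  ultimately show "scale (of_nat M) (scale (dynkin_coeff M ws) (rnest commutator (dynkin_letters u v ws))) =
      scale (bch_coeff ws) (lie_word_val u v (dynkin_word ws))"
    by (simp add: lie_word_val_def)
qed

text \<open>By the Dynkin-Specht-Wever lemma, M times the degree-M part of the BCH series is the
  Dynkin operator applied to it, a combination of right-nested commutators.\<close>

lemma scale_homog_part_bch_series:
  assumes M: "1 \<le> M" "M \<le> N"
  shows "scale (of_nat M) (\<Sum>w\<in>{w. length w = M}. scale (tcoeff (bch_series :: 'k tser) (w,[])) (word_val u v w)) =
    (\<Sum>w'\<in>{w. length w = M}. scale (tcoeff (bch_series :: 'k tser) (w',[])) (eval_upto u v N (lie_word w' :: 'k tser)))"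
proof -
  let ?W = "{w::bool list. length w = M}" and ?Z = "bch_series :: 'k tser"
  have "scale (of_nat M) (\<Sum>w\<in>?W. scale (tcoeff ?Z (w,[])) (word_val u v w)) =
      (\<Sum>w\<in>?W. scale (tcoeff (dynkin_op ?Z) (w,[])) (word_val u v w))"
    unfolding scale_sum_right by (rule sum.cong[OF refl]) (simp add: dynkin_op_bch_series)
  also have "\<dots> = (\<Sum>w\<in>?W. \<Sum>w'\<in>?W.
      scale (tcoeff ?Z (w',[])) (scale (tcoeff (lie_word w' :: 'k tser) (w,[])) (word_val u v w)))"
    by (rule sum.cong[OF refl]) (simp add: tcoeff_dynkin_op scale_sum_left)
  also have "\<dots> = (\<Sum>w'\<in>?W. scale (tcoeff ?Z (w',[])) (\<Sum>w\<in>?W. scale (tcoeff (lie_word w' :: 'k tser) (w,[])) (word_val u v w)))"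
    by (subst sum.swap) (simp add: scale_sum_right)
  also have "\<dots> = (\<Sum>w'\<in>?W. scale (tcoeff ?Z (w',[])) (eval_upto u v N (lie_word w' :: 'k tser)))"
    using M by (intro sum.cong refl arg_cong[where f="scale _"] eval_upto_homog[symmetric])
      (auto intro: homog_lie_word)
  finally show ?thesis .
qed

lemma sum_bch_series_lie_word_val:
  assumes M: "1 \<le> M"
  shows "(\<Sum>w'\<in>{w. length w = M}. scale (tcoeff (bch_series :: 'k tser) (w',[])) (lie_word_val u v w')) =
    scale (of_nat M) (dynkin_term scale commutator u v M)"
proof -
  have "(\<Sum>w'\<in>{w. length w = M}. scale (tcoeff (bch_series :: 'k tser) (w',[])) (lie_word_val u v w')) =
      (\<Sum>w'\<in>{w. length w = M}. \<Sum>ws\<in>{ws \<in> dynkin_words M. dynkin_word ws = w'}.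
        scale (bch_coeff ws) (lie_word_val u v (dynkin_word ws)))"
    by (intro sum.cong refl) (simp add: tcoeff_bch_series scale_sum_left)
  also have "\<dots> = (\<Sum>ws\<in>dynkin_words M. scale (bch_coeff ws) (lie_word_val u v (dynkin_word ws)))"
    by (rule sum.group) (auto simp: finite_dynkin_words length_dynkin_word_dynkin_words)
  finally show ?thesis
    by (simp add: of_nat_scale_dynkin_term[OF M])
qed

lemma homog_part_bch_series_eval:
  assumes u: "u \<in> F 1" and v: "v \<in> F 1" and M: "1 \<le> M" "M \<le> N"
  shows "(\<Sum>w\<in>{w. length w = M}. scale (tcoeff (bch_series :: 'k tser) (w,[])) (word_val u v w)) -
    dynkin_term scale commutator u v M \<in> F (Suc N)"
proof -
  let ?S = "\<Sum>w\<in>{w. length w = M}. scale (tcoeff (bch_series :: 'k tser) (w,[])) (word_val u v w)"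
  have "(\<Sum>w'\<in>{w. length w = M}. scale (tcoeff (bch_series :: 'k tser) (w',[])) (eval_upto u v N (lie_word w' :: 'k tser))) -
      (\<Sum>w'\<in>{w. length w = M}. scale (tcoeff (bch_series :: 'k tser) (w',[])) (lie_word_val u v w')) \<in> F (Suc N)"
    using M by (intro F_diff_sum F_diff_scale eval_upto_lie_word[OF u v]) auto
  then have "scale (of_nat M) ?S - scale (of_nat M) (dynkin_term scale commutator u v M) \<in> F (Suc N)"
    by (simp only: scale_homog_part_bch_series[OF M] sum_bch_series_lie_word_val[OF M(1)])
  then have "scale (1 / of_nat M) (scale (of_nat M) ?S - scale (of_nat M) (dynkin_term scale commutator u v M)) \<in> F (Suc N)"
    by (rule F_scale)
  then show ?thesis using M by (simp add: scale_right_diff_distrib)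
qed

lemma eval_upto_bch_series:
  assumes u: "u \<in> F 1" and v: "v \<in> F 1"
  shows "eval_upto u v N (bch_series :: 'k tser) - (\<Sum>M<Suc N. dynkin_term scale commutator u v M) \<in> F (Suc N)"
proof -
  have "eval_upto u v N (bch_series :: 'k tser) =
      (\<Sum>M\<in>{1..N}. \<Sum>w\<in>{w\<in>words_upto N. length w = M}. scale (tcoeff (bch_series :: 'k tser) (w,[])) (word_val u v w))"
    unfolding eval_upto_def by (rule sum.group[symmetric]) (auto simp: words_upto_def)
  also have "\<dots> = (\<Sum>M\<in>{1..N}. \<Sum>w\<in>{w. length w = M}. scale (tcoeff (bch_series :: 'k tser) (w,[])) (word_val u v w))"
    by (intro sum.cong refl) (auto simp: words_upto_def)
  finally have e1: "eval_upto u v N (bch_series :: 'k tser) = \<dots>" .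
  have e2: "(\<Sum>M<Suc N. dynkin_term scale commutator u v M) = (\<Sum>M\<in>{1..N}. dynkin_term scale commutator u v M)"
    by (rule sum.mono_neutral_right) (auto simp: not_less_eq_eq)
  show ?thesis unfolding e1 e2
    by (rule F_diff_sum) (rule homog_part_bch_series_eval[OF u v]; simp)
qed

text \<open>Modulo F (N + 1), Dynkin's series for u, v is the image of the BCH series under
  x := u, y := v, and e^x e^y - 1 = (e^x - 1) + (e^y - 1) + (e^x - 1)(e^y - 1).\<close>

lemma exp1_dynkin_C_upto:
  assumes u: "u \<in> F 1" and v: "v \<in> F 1" and N: "1 \<le> N"
  shows "exp1 (comm.dynkin_C u v) - (exp1 u + exp1 v + exp1 u * exp1 v) \<in> F (Suc N)"
proof -
  let ?c = "comm.dynkin_C u v" and ?Z = "bch_series :: 'k tser"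
  let ?X = "texp (xl False) - 1 :: 'k tser" and ?Y = "texp (xl True) - 1 :: 'k tser"
  have X: "order_ge 1 ?X" and Y: "order_ge 1 ?Y" by (intro order_ge_texp_minus_1 order_ge_xl)+
  let ?z = "eval_upto u v N ?Z"
  let ?e = "eval_upto u v N ?X + eval_upto u v N ?Y + eval_upto u v N ?X * eval_upto u v N ?Y"
  have "?c - ?z \<in> F (Suc N)"
    using F_diff_trans[OF comm.dynkin_C_trunc[OF u v, of "Suc N"] F_diff_swap[OF eval_upto_bch_series[OF u v, of N]]] .
  then have c: "exp1 ?c - exp1 ?z \<in> F (Suc N)"
    by (rule exp1_cong[OF comm.dynkin_C_in[OF u v] eval_upto_in[OF order_ge_bch_series u v]])
  have z: "exp1 ?z - eval_upto u v N (texp ?Z - 1) \<in> F (Suc N)"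
    by (rule exp1_eval_upto[OF u v order_ge_bch_series])
  have split: "texp ?Z - 1 = ?X + ?Y + ?X * ?Y"
    by (simp add: texp_bch_series exp_x_exp_y_def algebra_simps)
  have e: "eval_upto u v N (texp ?Z - 1) - ?e \<in> F (Suc N)"
    unfolding split eval_upto_add using eval_upto_mult[OF u v X Y, of N] by simp
  have uv: "(exp1 u + exp1 v + exp1 u * exp1 v) - ?e \<in> F (Suc N)"
    using exp1_eval_upto[OF u v order_ge_xl[of False], of N] exp1_eval_upto[OF u v order_ge_xl[of True], of N]
    by (intro F_diff_add F_diff_mult) (simp_all add: eval_upto_xl[OF N] letter_val_def)
  show ?thesis
    using F_diff_trans[OF F_diff_trans[OF F_diff_trans[OF c z] e] F_diff_swap[OF uv]] .
qed

theorem exp1_dynkin_C: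
  assumes u: "u \<in> F 1" and v: "v \<in> F 1"
  shows "exp1 (comm.dynkin_C u v) = exp1 u + exp1 v + exp1 u * exp1 v"
proof (rule hausdorff_diff)
  fix n
  show "exp1 (comm.dynkin_C u v) - (exp1 u + exp1 v + exp1 u * exp1 v) \<in> F n"
  proof (cases "n \<le> 1")
    case True
    have "exp1 (comm.dynkin_C u v) - (exp1 u + exp1 v + exp1 u * exp1 v) \<in> F 1"
      by (intro F_diff F_add exp1_in comm.dynkin_C_in u v F_mult_left)
    then show ?thesis using True F_mono by blast
  next
    case False
    then obtain N where "n = Suc N" "1 \<le> N" by (cases n) auto
    then show ?thesis using exp1_dynkin_C_upto[OF u v] by simp
  qed
qed

lemma uexp_dynkin_C:
  assumes x: "x \<in> F 1" and y: "y \<in> F 1"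
  shows "uexp scale F (comm.dynkin_C x y) = umult scale (uexp scale F x) (uexp scale F y)"
  by (simp add: uexp_eq exp1_dynkin_C[OF x y] umult_def add.commute)

lemma assoc_C_eq_dynkin_C:
  assumes x: "x \<in> F 1" and y: "y \<in> F 1"
  shows "assoc_C scale F x y = comm.dynkin_C x y"
  unfolding assoc_C_def
proof (rule the_equality)
  show "comm.dynkin_C x y \<in> F 1 \<and> uexp scale F (comm.dynkin_C x y) = umult scale (uexp scale F x) (uexp scale F y)"
    using comm.dynkin_C_in[OF x y] uexp_dynkin_C[OF x y] by simp
  fix c assume c: "c \<in> F 1 \<and> uexp scale F c = umult scale (uexp scale F x) (uexp scale F y)"
  then have "uexp scale F c = uexp scale F (comm.dynkin_C x y)"
    using uexp_dynkin_C[OF x y] by simp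
  then have "exp1 c = exp1 (comm.dynkin_C x y)"
    by (simp add: uexp_eq)
  then show "c = comm.dynkin_C x y"
    using exp1_inj c comm.dynkin_C_in[OF x y] by blast
qed

end

lemma bij_betw_image_right_inverse:
  assumes "\<And>a. a \<in> B \<Longrightarrow> g (D a) = a"
  shows "bij_betw g (D ` B) B"
  by (rule bij_betw_byWitness[where f'=D]) (use assms in auto)

lemma filtered_bracket_if_cf_lie_algebra: "cf_lie_algebra scale br F \<Longrightarrow> filtered_bracket scale F br"
  unfolding cf_lie_algebra_def lie_algebra_def filtered_bracket_def filtered_bracket_axioms_def
    cf_space_def
  by blast

lemma (in filtered_bracket) lie_hom_dynkin_C:
  assumes B: "cf_algebra scaleB FB" and lin: "Vector_Spaces.linear scale scaleB \<phi>"
    and hom: "\<And>x y. \<phi> (br x y) = \<phi> x * \<phi> y - \<phi> y * \<phi> x"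
    and filt: "\<And>n x. x \<in> F n \<Longrightarrow> \<phi> x \<in> FB n"
    and x: "x \<in> F 1" and y: "y \<in> F 1"
  shows "\<phi> (dynkin_C x y) = lie_C scaleB commutator FB (\<phi> x) (\<phi> y)"
proof -
  interpret B: cf_algebra scaleB FB by (rule B)
  interpret phi: Vector_Spaces.linear scale scaleB \<phi> by (rule lin)
  have "\<phi> (rnest br zs) = rnest commutator (map \<phi> zs)" for zs
    by (induction zs rule: induct_list012) (simp_all add: hom commutator_def)
  moreover have "map \<phi> (dynkin_letters x y ws) = dynkin_letters (\<phi> x) (\<phi> y) ws" for ws
    by (induction ws) (simp_all add: dynkin_letters_def)
  ultimately have "\<phi> (dynkin_term scale br x y n) = dynkin_term scaleB commutator (\<phi> x) (\<phi> y) n" for n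
    by (simp add: dynkin_term_def phi.sum phi.scale)
  then have "\<phi> (dynkin_C x y) - (\<Sum>i<n. dynkin_term scaleB commutator (\<phi> x) (\<phi> y) i) \<in> FB n" for n
    using filt[OF dynkin_C_trunc[OF x y, of n]] by (simp add: phi.diff phi.sum)
  from B.F_diff_trans[OF this B.F_diff_swap[OF B.comm.dynkin_C_trunc[OF filt[OF x] filt[OF y]]]]
  show ?thesis by (rule B.hausdorff_diff)
qed

theorem (in cf_algebra) bch_decomposition_assoc:
  assumes lin: "Vector_Spaces.linear scale scale P" and PF: "\<forall>n. P ` F n \<subseteq> F n"
  shows
    "(\<forall>a\<in>F 1. uexp scale F a =
                umult scale (uexp scale F (fst (bch_D F (assoc_C scale F) P a)))
                            (uexp scale F (snd (bch_D F (assoc_C scale F) P a)))) \<and>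
     (\<forall>a\<in>F 1. case_prod (assoc_C scale F) (bch_D F (assoc_C scale F) P a) = a) \<and>
     bij_betw (case_prod (assoc_C scale F)) (bch_D F (assoc_C scale F) P ` F 1) (F 1) \<and>
     (\<forall>B. B \<subseteq> F 1 \<longrightarrow>
        bij_betw (case_prod (assoc_C scale F)) (bch_D F (assoc_C scale F) P ` B) B)"
proof -
  have D_eq: "bch_D F (assoc_C scale F) P a = bch_D F comm.dynkin_C P a" if a: "a \<in> F 1" for a
    using comm.bch_D_cong[OF lin PF _ a] assoc_C_eq_dynkin_C by blast
  note D_in = comm.bch_D_in[OF lin PF]
  note D_inv = comm.bch_D_right_inverse[OF lin PF]
  have inv: "case_prod (assoc_C scale F) (bch_D F (assoc_C scale F) P a) = a" if a: "a \<in> F 1" for a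
    using D_inv[OF a] assoc_C_eq_dynkin_C[OF D_in[OF a]] by (simp add: D_eq[OF a] case_prod_beta)
  have uexp: "uexp scale F a = umult scale (uexp scale F (fst (bch_D F (assoc_C scale F) P a)))
      (uexp scale F (snd (bch_D F (assoc_C scale F) P a)))" if a: "a \<in> F 1" for a
    using uexp_dynkin_C[OF D_in[OF a]] D_inv[OF a] by (simp add: D_eq[OF a] case_prod_beta)
  have bij: "bij_betw (case_prod (assoc_C scale F)) (bch_D F (assoc_C scale F) P ` B) B"
    if "B \<subseteq> F 1" for B
    using that inv by (intro bij_betw_image_right_inverse) blast
  show ?thesis
    by (intro conjI ballI allI impI uexp inv bij order_refl)
qed

theorem (in filtered_bracket) bch_decomposition_lie:
  assumes lin: "Vector_Spaces.linear scale scale P" and PF: "\<forall>n. P ` F n \<subseteq> F n"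
  shows
    "(\<forall>a\<in>F 1. \<forall>(scaleB :: 'k \<Rightarrow> 'b::ring \<Rightarrow> 'b) FB (\<phi> :: 'a \<Rightarrow> 'b).
        cf_assoc_algebra scaleB FB \<and> Vector_Spaces.linear scale scaleB \<phi> \<and>
        (\<forall>x y. \<phi> (br x y) = \<phi> x * \<phi> y - \<phi> y * \<phi> x) \<and> (\<forall>n. \<phi> ` F n \<subseteq> FB n) \<longrightarrow>
        uexp scaleB FB (\<phi> a) =
          umult scaleB (uexp scaleB FB (\<phi> (fst (bch_D F dynkin_C P a))))
                       (uexp scaleB FB (\<phi> (snd (bch_D F dynkin_C P a))))) \<and>
     (\<forall>a\<in>F 1. case_prod dynkin_C (bch_D F dynkin_C P a) = a) \<and>
     bij_betw (case_prod dynkin_C) (bch_D F dynkin_C P ` F 1) (F 1) \<and>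
     (\<forall>B. B \<subseteq> F 1 \<longrightarrow> bij_betw (case_prod dynkin_C) (bch_D F dynkin_C P ` B) B)"
proof -
  note D_in = bch_D_in[OF lin PF] and D_inv = bch_D_right_inverse[OF lin PF]
  have uexp: "uexp scaleB FB (\<phi> a) = umult scaleB (uexp scaleB FB (\<phi> (fst (bch_D F dynkin_C P a))))
      (uexp scaleB FB (\<phi> (snd (bch_D F dynkin_C P a))))"
    if a: "a \<in> F 1" and B: "cf_assoc_algebra scaleB FB" and lin_phi: "Vector_Spaces.linear scale scaleB \<phi>"
      and hom: "\<forall>x y. \<phi> (br x y) = \<phi> x * \<phi> y - \<phi> y * \<phi> x" and filt: "\<forall>n. \<phi> ` F n \<subseteq> FB n"
    for a and scaleB :: "'k \<Rightarrow> 'b::ring \<Rightarrow> 'b" and FB \<phi>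
  proof -
    interpret B: cf_algebra scaleB FB by (rule cf_algebra.intro[OF B])
    have filt': "\<And>n x. x \<in> F n \<Longrightarrow> \<phi> x \<in> FB n" using filt by blast
    have "\<phi> a = B.comm.dynkin_C (\<phi> (fst (bch_D F dynkin_C P a))) (\<phi> (snd (bch_D F dynkin_C P a)))"
      using lie_hom_dynkin_C[OF B.cf_algebra_axioms lin_phi _ filt' D_in[OF a]] hom D_inv[OF a]
      by (simp add: case_prod_beta)
    with B.uexp_dynkin_C[OF filt'[OF D_in(1)[OF a]] filt'[OF D_in(2)[OF a]]] show ?thesis by simp
  qed
  have bij: "bij_betw (case_prod dynkin_C) (bch_D F dynkin_C P ` B) B" if "B \<subseteq> F 1" for B
    using that D_inv by (intro bij_betw_image_right_inverse) blast
  show ?thesis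
    by (intro conjI ballI allI impI uexp D_inv bij order_refl) auto
qed

theorem theorem2p3:
  fixes scale :: "'k::field_char_0 \<Rightarrow> 'a::ring \<Rightarrow> 'a"
    and F :: "nat \<Rightarrow> 'a set" and P :: "'a \<Rightarrow> 'a"
    and scaleL :: "'k \<Rightarrow> 'l::ab_group_add \<Rightarrow> 'l" and br :: "'l \<Rightarrow> 'l \<Rightarrow> 'l"
    and FL :: "nat \<Rightarrow> 'l set" and PL :: "'l \<Rightarrow> 'l"
  shows
  \<comment> \<open>Case 1: A is a complete filtered associative algebra\<close>
  "(cf_assoc_algebra scale F \<and> Vector_Spaces.linear scale scale P \<and> (\<forall>n. P ` F n \<subseteq> F n) \<longrightarrow>
     (\<forall>a\<in>F 1. uexp scale F a =
                umult scale (uexp scale F (fst (bch_D F (assoc_C scale F) P a)))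
                            (uexp scale F (snd (bch_D F (assoc_C scale F) P a)))) \<and>
     (\<forall>a\<in>F 1. case_prod (assoc_C scale F) (bch_D F (assoc_C scale F) P a) = a) \<and>
     bij_betw (case_prod (assoc_C scale F)) (bch_D F (assoc_C scale F) P ` F 1) (F 1) \<and>
     (\<forall>B. B \<subseteq> F 1 \<longrightarrow>
        bij_betw (case_prod (assoc_C scale F)) (bch_D F (assoc_C scale F) P ` B) B))
   \<and>
  \<comment> \<open>Case 2: A is a complete filtered Lie algebra; exp is taken in (the completion of) U(A),
      expressed through every filtration-preserving Lie morphism phi into a complete filtered
      associative algebra (of arbitrary type 'b)\<close>
   (cf_lie_algebra scaleL br FL \<and> Vector_Spaces.linear scaleL scaleL PL \<and> (\<forall>n. PL ` FL n \<subseteq> FL n) \<longrightarrow>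
     (\<forall>a\<in>FL 1. \<forall>(scaleB :: 'k \<Rightarrow> 'b::ring \<Rightarrow> 'b) FB (\<phi> :: 'l \<Rightarrow> 'b).
        cf_assoc_algebra scaleB FB \<and> Vector_Spaces.linear scaleL scaleB \<phi> \<and>
        (\<forall>x y. \<phi> (br x y) = \<phi> x * \<phi> y - \<phi> y * \<phi> x) \<and> (\<forall>n. \<phi> ` FL n \<subseteq> FB n) \<longrightarrow>
        uexp scaleB FB (\<phi> a) =
          umult scaleB (uexp scaleB FB (\<phi> (fst (bch_D FL (lie_C scaleL br FL) PL a))))
                       (uexp scaleB FB (\<phi> (snd (bch_D FL (lie_C scaleL br FL) PL a))))) \<and>
     (\<forall>a\<in>FL 1. case_prod (lie_C scaleL br FL) (bch_D FL (lie_C scaleL br FL) PL a) = a) \<and>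
     bij_betw (case_prod (lie_C scaleL br FL)) (bch_D FL (lie_C scaleL br FL) PL ` FL 1) (FL 1) \<and>
     (\<forall>B. B \<subseteq> FL 1 \<longrightarrow>
        bij_betw (case_prod (lie_C scaleL br FL)) (bch_D FL (lie_C scaleL br FL) PL ` B) B))"
  by (rule conjI; rule impI; elim conjE;
      rule cf_algebra.bch_decomposition_assoc[OF cf_algebra.intro]
        filtered_bracket.bch_decomposition_lie[OF filtered_bracket_if_cf_lie_algebra];
      assumption)

end
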